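(* Assume the standing setup. Let $j_1,\dots,j_{d+1}\in[k]$. If $\alpha_{j_1},\dots,\alpha_{j_{d+1}}$ are linearly independent in $V_1$, then $\beta_{j_1},\dots,\beta_{j_{d+1}}$ are linearly independent in $V_2$.
   Context: Standing setup: $\mathbb{F}$ is a field of characteristic $0$; $W$ is a group with finite generating set $S=\{s_1,\dots,s_k\}$. A linear map on a finite-dimensional space is a (generalized) reflection if it is diagonalizable and $s-\operatorname{Id}$ has rank $1$; a reflection vector is a nonzero vector in $\operatorname{Im}(s-\operatorname{Id})$. $(V_1,\rho_1)$, $(V_2,\rho_2)$ are irreducible reflection representations of $(W,S)$ (each $s_i$ acts by a reflection), both of dimension $n$. For each $i\in[k]$, $\alpha_i\in V_1$ is a chosen reflection vector of $s_i$ with $s_i\alpha_i=\lambda_i\alpha_i$ and $\beta_i\in V_2$ a chosen reflection vector of $s_i$ with $s_i\beta_i=\mu_i\beta_i$. $d$ is an integer with $1\le d\le n-1$, and $\psi:\bigwedge^dV_1\to\bigwedge^dV_2$ is an isomorphism of $W$-modules ($W$ acting diagonally). *)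

theory Defs
  imports "Jordan_Normal_Form.Matrix" "Jordan_Normal_Form.Determinant"
          "Jordan_Normal_Form.DL_Submatrix" "HOL-Algebra.Generated_Groups"
begin

definition diagonalizable :: "nat \<Rightarrow> 'a::field mat \<Rightarrow> bool" where
  "diagonalizable n A \<longleftrightarrow> A \<in> carrier_mat n n \<and>
     (\<exists>D. D \<in> carrier_mat n n \<and> diagonal_mat D \<and> similar_mat A D)"

definition refl_image :: "nat \<Rightarrow> 'a::field mat \<Rightarrow> 'a vec set" where
  "refl_image n A = {(A - 1\<^sub>m n) *\<^sub>v v | v. v \<in> carrier_vec n}"

definition is_reflection :: "nat \<Rightarrow> 'a::field mat \<Rightarrow> bool" where
  "is_reflection n A \<longleftrightarrow> diagonalizable n A \<and>
     (\<exists>u \<in> carrier_vec n. u \<noteq> 0\<^sub>v n \<and> refl_image n A = {c \<cdot>\<^sub>v u | c. True})"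

definition is_reflection_vector :: "nat \<Rightarrow> 'a::field mat \<Rightarrow> 'a vec \<Rightarrow> bool" where
  "is_reflection_vector n A v \<longleftrightarrow> v \<noteq> 0\<^sub>v n \<and> v \<in> refl_image n A"

definition is_rep :: "('g, 'b) monoid_scheme \<Rightarrow> nat \<Rightarrow> ('g \<Rightarrow> 'a::field mat) \<Rightarrow> bool" where
  "is_rep W n \<rho> \<longleftrightarrow> (\<forall>g \<in> carrier W. \<rho> g \<in> carrier_mat n n) \<and>
     \<rho> \<one>\<^bsub>W\<^esub> = 1\<^sub>m n \<and>
     (\<forall>g \<in> carrier W. \<forall>h \<in> carrier W. \<rho> (g \<otimes>\<^bsub>W\<^esub> h) = \<rho> g * \<rho> h)"

definition is_subspace :: "nat \<Rightarrow> 'a::field vec set \<Rightarrow> bool" where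
  "is_subspace n U \<longleftrightarrow> U \<subseteq> carrier_vec n \<and> 0\<^sub>v n \<in> U \<and>
     (\<forall>u \<in> U. \<forall>v \<in> U. u + v \<in> U) \<and> (\<forall>c. \<forall>u \<in> U. c \<cdot>\<^sub>v u \<in> U)"

definition irreducible_rep :: "('g, 'b) monoid_scheme \<Rightarrow> nat \<Rightarrow> ('g \<Rightarrow> 'a::field mat) \<Rightarrow> bool" where
  "irreducible_rep W n \<rho> \<longleftrightarrow> is_rep W n \<rho> \<and> n \<noteq> 0 \<and>
     (\<forall>U. is_subspace n U \<and> (\<forall>g \<in> carrier W. \<forall>u \<in> U. \<rho> g *\<^sub>v u \<in> U)
        \<longrightarrow> U = {0\<^sub>v n} \<or> U = carrier_vec n)"

definition reflection_rep ::
  "('g, 'b) monoid_scheme \<Rightarrow> nat \<Rightarrow> (nat \<Rightarrow> 'g) \<Rightarrow> nat \<Rightarrow> ('g \<Rightarrow> 'a::field mat) \<Rightarrow> bool" where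
  "reflection_rep W k s n \<rho> \<longleftrightarrow> is_rep W n \<rho> \<and> (\<forall>i < k. is_reflection n (\<rho> (s i)))"

text \<open>Linear independence of the family v 0, ..., v (m-1) in F^n (repetitions allowed,
  hence stated for families, not sets).\<close>
definition lin_indep_family :: "nat \<Rightarrow> nat \<Rightarrow> (nat \<Rightarrow> 'a::field vec) \<Rightarrow> bool" where
  "lin_indep_family n m v \<longleftrightarrow> (\<forall>i < m. v i \<in> carrier_vec n) \<and>
     (\<forall>c :: nat \<Rightarrow> 'a.
        foldr (\<lambda>i acc. c i \<cdot>\<^sub>v v i + acc) [0..<m] (0\<^sub>v n) = 0\<^sub>v n \<longrightarrow> (\<forall>i < m. c i = 0))"

text \<open>We model the d-th exterior power of F^n concretely by its standard basis
  e_I = e_{i_1} \<and> ... \<and> e_{i_d} (i_1 < ... < i_d), indexed by the d-subsets I of {0..<n}.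
  A matrix A acts on it by the d-th compound matrix: A e_J = sum_I det(A[I,J]) e_I,
  where A[I,J] is the submatrix with rows I and columns J (in increasing order).\<close>
definition dsubsets :: "nat \<Rightarrow> nat \<Rightarrow> nat set set" where
  "dsubsets n d = {I. I \<subseteq> {..<n} \<and> card I = d}"

definition compound :: "'a::comm_ring_1 mat \<Rightarrow> nat set \<Rightarrow> nat set \<Rightarrow> 'a" where
  "compound A I J = det (submatrix A I J)"

text \<open>A linear map between d-th exterior powers of F^n, given by its matrix
  P I J (I, J d-subsets) w.r.t. the standard bases, is an isomorphism of W-modules
  (W acting diagonally, i.e. by compound matrices) from the rep rho1 to the rep rho2.\<close>
definition ext_pow_iso ::
  "('g, 'b) monoid_scheme \<Rightarrow> nat \<Rightarrow> nat \<Rightarrow> ('g \<Rightarrow> 'a::field mat) \<Rightarrow> ('g \<Rightarrow> 'a mat)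
     \<Rightarrow> (nat set \<Rightarrow> nat set \<Rightarrow> 'a) \<Rightarrow> bool" where
  "ext_pow_iso W n d \<rho>1 \<rho>2 P \<longleftrightarrow>
     (\<exists>Q :: nat set \<Rightarrow> nat set \<Rightarrow> 'a.
        (\<forall>I \<in> dsubsets n d. \<forall>J \<in> dsubsets n d.
           (\<Sum>K \<in> dsubsets n d. P I K * Q K J) = (if I = J then 1 else 0) \<and>
           (\<Sum>K \<in> dsubsets n d. Q I K * P K J) = (if I = J then 1 else 0))) \<and>
     (\<forall>g \<in> carrier W. \<forall>I \<in> dsubsets n d. \<forall>J \<in> dsubsets n d.
        (\<Sum>K \<in> dsubsets n d. P I K * compound (\<rho>1 g) K J) =
        (\<Sum>K \<in> dsubsets n d. compound (\<rho>2 g) I K * P K J))"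

end

theory Submission
  imports Defs "Jordan_Normal_Form.Gauss_Jordan_Elimination"
begin

text \<open>For a reflection \<open>s\<close> with reflection vector \<open>\<gamma>\<close>, every vector is moved by \<open>s\<close>
  only along \<open>\<gamma>\<close>. Consider the common image \<open>C\<close> of the maps \<open>\<And>\<^sup>d s\<^bsub>j\<^sub>t\<^esub> - 1\<close>,
  \<open>t = 1, \<dots>, d + 1\<close>, on \<open>\<And>\<^sup>d V\<close>. If the reflection vectors are independent, a base change
  makes them distinct standard basis vectors \<open>e\<^bsub>p(t)\<^esub>\<close>; a \<open>d\<close>-set \<open>J\<close> misses some
  \<open>p(t)\<close>, and then row \<open>J\<close> of \<open>\<And>\<^sup>d s\<^bsub>j\<^sub>t\<^esub> - 1\<close> vanishes, so \<open>C = 0\<close>. If they are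
  dependent, a base change puts them into \<open>span (e\<^sub>1, \<dots>, e\<^sub>d)\<close>; then \<open>e\<^sub>1 \<and> \<dots> \<and> e\<^sub>d\<close> is
  an eigenvector of every \<open>\<And>\<^sup>d s\<^bsub>j\<^sub>t\<^esub>\<close> with eigenvalue \<open>\<mu>\<^sub>t \<noteq> 1\<close>, so \<open>C \<noteq> 0\<close>.
  Since \<open>\<psi>\<close> intertwines \<open>\<And>\<^sup>d s - 1\<close> on both sides, it maps the common image for
  \<open>V\<^sub>1\<close> onto that for \<open>V\<^sub>2\<close>, which gives the claim.\<close>

section \<open>Subsets of size \<open>d\<close> and the Cauchy--Binet formula\<close>

lemma pick_image_lessThan_card:
  assumes "finite K" shows "pick K ` {..<card K} = K"
proof
  show "pick K ` {..<card K} \<subseteq> K" using pick_in_set_le by auto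
  show "K \<subseteq> pick K ` {..<card K}"
  proof
    fix x assume x: "x \<in> K"
    have "card {a\<in>K. a < x} < card K"
      by (rule psubset_card_mono[OF assms]) (use x in auto)
    then show "x \<in> pick K ` {..<card K}"
      by (intro image_eqI[where x="card {a\<in>K. a < x}"]) (simp_all add: pick_card_in_set[OF x])
  qed
qed

lemma inj_on_pick: "inj_on (pick K) {..<card K}"
  by (rule inj_onI) (metis lessThan_iff nat_neq_iff pick_mono_le)

lemma pick_atLeastLessThan: "b < d \<Longrightarrow> pick {0..<d} b = b"
  using pick_reduce_set[of b d UNIV] by (simp add: pick_UNIV atLeast0LessThan lessThan_def)

lemma finite_dsubsets: "finite (dsubsets n d)"
  by (rule finite_subset[of _ "Pow {..<n}"]) (auto simp: dsubsets_def)

lemma dsubsetsD: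
  assumes "K \<in> dsubsets n d"
  shows "K \<subseteq> {..<n}" "card K = d" "finite K" "{j. j < n \<and> j \<in> K} = K"
  using assms unfolding dsubsets_def by (auto intro: finite_subset)

lemma atLeastLessThan_in_dsubsets: "d \<le> n \<Longrightarrow> {0..<d} \<in> dsubsets n d"
  by (auto simp: dsubsets_def)

text \<open>The Cauchy--Binet sum over maps \<open>{0..<d} \<rightarrow> {0..<n}\<close> is reindexed by pairs \<open>(K, p)\<close>
  of a \<open>d\<close>-subset \<open>K\<close> and a permutation \<open>p\<close>: the injection \<open>pick_perm d K p\<close> lists \<open>K\<close> in
  the order given by \<open>p\<close>, and \<open>rank_perm d f\<close> recovers \<open>p\<close> from an injection \<open>f\<close>.\<close>

definition injections :: "nat \<Rightarrow> nat \<Rightarrow> (nat \<Rightarrow> nat) set" where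
  "injections d n = {f. (\<forall>i\<in>{0..<d}. f i \<in> {0..<n}) \<and> (\<forall>i. i \<notin> {0..<d} \<longrightarrow> f i = i) \<and>
     inj_on f {0..<d}}"

definition pick_perm :: "nat \<Rightarrow> nat set \<Rightarrow> (nat \<Rightarrow> nat) \<Rightarrow> nat \<Rightarrow> nat" where
  "pick_perm d K p i = (if i < d then pick K (p i) else i)"

definition rank_perm :: "nat \<Rightarrow> (nat \<Rightarrow> nat) \<Rightarrow> nat \<Rightarrow> nat" where
  "rank_perm d f i = (if i < d then card {a \<in> f ` {0..<d}. a < f i} else i)"

lemma pick_perm_injection:
  assumes K: "K \<in> dsubsets n d" and p: "p permutes {0..<d}"
  shows "pick_perm d K p \<in> injections d n" "pick_perm d K p ` {0..<d} = K"
    "rank_perm d (pick_perm d K p) = p"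
proof -
  note KD = dsubsetsD[OF K]
  have pd: "\<And>i. i < d \<Longrightarrow> p i < d" using p permutes_in_image by fastforce
  have "inj_on (pick_perm d K p) {0..<d}"
  proof (rule inj_onI)
    fix x y assume xy: "x \<in> {0..<d}" "y \<in> {0..<d}" "pick_perm d K p x = pick_perm d K p y"
    hence "p x = p y" using inj_on_pick[of K] pd KD by (auto simp: inj_on_def pick_perm_def)
    thus "x = y" using permutes_inj[OF p] by (auto simp: inj_def)
  qed
  moreover have "\<And>i. i < d \<Longrightarrow> pick K (p i) < n" using pick_in_set_le[of _ K] pd KD by auto
  ultimately show "pick_perm d K p \<in> injections d n"
    unfolding injections_def pick_perm_def by auto
  have "pick_perm d K p ` {0..<d} = pick K ` (p ` {0..<d})" unfolding pick_perm_def by auto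
  also have "p ` {0..<d} = {..<card K}" using permutes_image[OF p] KD by auto
  finally show img: "pick_perm d K p ` {0..<d} = K" using pick_image_lessThan_card[OF KD(3)] by simp
  have "\<And>i. \<not> i < d \<Longrightarrow> p i = i" using p unfolding permutes_def by auto
  then show "rank_perm d (pick_perm d K p) = p"
    using card_pick_le[of _ K] pd KD unfolding rank_perm_def img by (auto simp: pick_perm_def)
qed

lemma rank_perm_permutes:
  assumes f: "f \<in> injections d n"
  shows "f ` {0..<d} \<in> dsubsets n d" "rank_perm d f permutes {0..<d}"
    "pick_perm d (f ` {0..<d}) (rank_perm d f) = f"
proof -
  define K where "K = f ` {0..<d}"
  have injf: "inj_on f {0..<d}" using f unfolding injections_def by auto
  have cardK: "card K = d" unfolding K_def using card_image[OF injf] by simp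
  have fiK: "\<And>i. i < d \<Longrightarrow> f i \<in> K" unfolding K_def by auto
  show "f ` {0..<d} \<in> dsubsets n d"
    using f cardK unfolding K_def dsubsets_def injections_def by auto
  have rank_lt: "rank_perm d f i < d" if i: "i < d" for i
  proof -
    have "card {a \<in> K. a < f i} < card K"
      by (rule psubset_card_mono) (use fiK[OF i] K_def in auto)
    thus ?thesis using i cardK unfolding rank_perm_def K_def by simp
  qed
  have pick_rank: "pick K (rank_perm d f i) = f i" if "i < d" for i
    unfolding rank_perm_def K_def using pick_card_in_set fiK[OF that] that K_def by auto
  show "rank_perm d f permutes {0..<d}"
  proof (rule inj_on_nat_permutes)
    show "inj_on (rank_perm d f) {0..<d}"
      by (rule inj_onI) (metis atLeastLessThan_iff injf inj_on_eq_iff pick_rank)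
  qed (use rank_lt in \<open>auto simp: rank_perm_def\<close>)
  show "pick_perm d (f ` {0..<d}) (rank_perm d f) = f"
    using pick_rank f unfolding injections_def K_def by (auto simp: pick_perm_def)
qed

lemma bij_betw_pick_perm:
  "bij_betw (\<lambda>(K, p). pick_perm d K p) (dsubsets n d \<times> {p. p permutes {0..<d}}) (injections d n)"
  by (rule bij_betw_byWitness[where f' = "\<lambda>f. (f ` {0..<d}, rank_perm d f)"])
     (auto simp: pick_perm_injection rank_perm_permutes)

lemma det_mult_sum_injections:
  fixes X Y :: "'a::comm_ring_1 mat"
  assumes X: "X \<in> carrier_mat d n" and Y: "Y \<in> carrier_mat n d"
  shows "det (X * Y) = (\<Sum>f\<in>injections d n.
           (\<Prod>i=0..<d. X $$ (i, f i)) * det (mat\<^sub>r d d (\<lambda>i. row Y (f i))))"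
proof -
  define F where "F = {f. (\<forall>i\<in>{0..<d}. f i \<in> {0..<n}) \<and> (\<forall>i. i \<notin> {0..<d} \<longrightarrow> f i = i)}"
  define h where "h f = (\<Prod>i=0..<d. X $$ (i, f i)) * det (mat\<^sub>r d d (\<lambda>i. row Y (f i)))" for f
  have rowY: "\<And>k. row Y k \<in> carrier_vec d" using Y by auto
  have "det (X*Y) = (\<Sum>f\<in>F. det (mat\<^sub>r d d (\<lambda>i. X $$ (i, f i) \<cdot>\<^sub>v row Y (f i))))"
    unfolding mat_mul_finsum_alt[OF X Y] F_def
    by (rule det_linear_rows_sum) (use rowY in auto)
  also have "\<dots> = sum h F"
    by (rule sum.cong[OF refl])
       (use det_rows_mul[of "\<lambda>i. row Y (_ i)" d "\<lambda>i. X$$(i, _ i)"] rowY in \<open>auto simp: h_def\<close>)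
  also have "\<dots> = sum h (injections d n)"
  proof (rule sum.mono_neutral_right)
    show "finite F" unfolding F_def by (rule finite_bounded_functions) auto
    show "injections d n \<subseteq> F" unfolding injections_def F_def by auto
    show "\<forall>f\<in>F - injections d n. h f = 0"
    proof
      fix f assume "f \<in> F - injections d n"
      then obtain i j where ij: "i < d" "j < d" "i \<noteq> j" "f i = f j"
        unfolding injections_def F_def inj_on_def by auto
      have "det (mat\<^sub>r d d (\<lambda>i. row Y (f i))) = 0"
        by (rule det_identical_rows[OF mat_row_carrierI ij(3) ij(1) ij(2)]) (use ij Y in auto)
      thus "h f = 0" unfolding h_def by simp
    qed
  qed
  finally show ?thesis unfolding h_def .
qed

lemma sum_permutes_pick_perm:
  fixes X Y :: "'a::comm_ring_1 mat"
  assumes X: "X \<in> carrier_mat d n" and Y: "Y \<in> carrier_mat n d" and K: "K \<in> dsubsets n d"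
  shows "(\<Sum>p | p permutes {0..<d}. (\<Prod>i=0..<d. X $$ (i, pick_perm d K p i)) *
            det (mat\<^sub>r d d (\<lambda>i. row Y (pick_perm d K p i))))
         = det (submatrix X UNIV K) * det (submatrix Y K UNIV)"
proof -
  note KD = dsubsetsD[OF K]
  define XK where "XK = submatrix X UNIV K"
  define YK where "YK = submatrix Y K UNIV"
  have XK: "XK \<in> carrier_mat d d" and YK: "YK \<in> carrier_mat d d"
    unfolding XK_def YK_def using X Y KD by (auto simp: dim_submatrix)
  have XKi: "\<And>a j. a < d \<Longrightarrow> j < d \<Longrightarrow> XK $$ (a,j) = X $$ (a, pick K j)"
    unfolding XK_def using X KD by (subst submatrix_index) (auto simp: pick_UNIV)
  have YKi: "\<And>a j. a < d \<Longrightarrow> j < d \<Longrightarrow> YK $$ (a,j) = Y $$ (pick K a, j)"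
    unfolding YK_def using Y KD by (subst submatrix_index) (auto simp: pick_UNIV)
  have summand: "(\<Prod>i=0..<d. X $$ (i, pick_perm d K p i)) * det (mat\<^sub>r d d (\<lambda>i. row Y (pick_perm d K p i)))
      = signof p * (\<Prod>i=0..<d. XK $$ (i, p i)) * det YK" if p: "p permutes {0..<d}" for p
  proof -
    have pd: "\<And>i. i < d \<Longrightarrow> p i < d" using p permutes_in_image by fastforce
    have "mat\<^sub>r d d (\<lambda>i. row Y (pick_perm d K p i)) = mat d d (\<lambda>(i,j). YK $$ (p i, j))"
      by (rule eq_matI) (use pd YKi Y in \<open>auto simp: pick_perm_def row_def\<close>)
    moreover have "(\<Prod>i=0..<d. X $$ (i, pick_perm d K p i)) = (\<Prod>i=0..<d. XK $$ (i, p i))"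
      by (rule prod.cong[OF refl]) (use pd XKi in \<open>auto simp: pick_perm_def\<close>)
    ultimately show ?thesis by (simp add: det_permute_rows[OF YK p])
  qed
  have "(\<Sum>p | p permutes {0..<d}. (\<Prod>i=0..<d. X $$ (i, pick_perm d K p i)) *
            det (mat\<^sub>r d d (\<lambda>i. row Y (pick_perm d K p i))))
      = (\<Sum>p | p permutes {0..<d}. signof p * (\<Prod>i=0..<d. XK $$ (i, p i))) * det YK"
    by (simp add: summand sum_distrib_right)
  also have "\<dots> = det XK * det YK" unfolding det_def'[OF XK] ..
  finally show ?thesis unfolding XK_def YK_def .
qed

theorem cauchy_binet:
  fixes X Y :: "'a::comm_ring_1 mat"
  assumes X: "X \<in> carrier_mat d n" and Y: "Y \<in> carrier_mat n d"
  shows "det (X * Y) = (\<Sum>K\<in>dsubsets n d. det (submatrix X UNIV K) * det (submatrix Y K UNIV))"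
proof -
  let ?h = "\<lambda>f. (\<Prod>i=0..<d. X $$ (i, f i)) * det (mat\<^sub>r d d (\<lambda>i. row Y (f i)))"
  have "det (X * Y) = sum ?h (injections d n)" by (rule det_mult_sum_injections[OF X Y])
  also have "\<dots> = (\<Sum>(K, p) \<in> dsubsets n d \<times> {p. p permutes {0..<d}}. ?h (pick_perm d K p))"
    using sum.reindex_bij_betw[OF bij_betw_pick_perm, of ?h] by (simp add: case_prod_beta')
  also have "\<dots> = (\<Sum>K\<in>dsubsets n d. \<Sum>p | p permutes {0..<d}. ?h (pick_perm d K p))"
    by (rule sum.Sigma[symmetric]) (simp_all add: finite_dsubsets finite_permutations)
  also have "\<dots> = (\<Sum>K\<in>dsubsets n d. det (submatrix X UNIV K) * det (submatrix Y K UNIV))"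
    by (rule sum.cong[OF refl]) (rule sum_permutes_pick_perm[OF X Y])
  finally show ?thesis .
qed

section \<open>Compound matrices\<close>

lemma submatrix_split_rows: "submatrix A I J = submatrix (submatrix A I UNIV) UNIV J"
proof (rule eq_matI)
  fix i j assume "i < dim_row (submatrix (submatrix A I UNIV) UNIV J)"
    and "j < dim_col (submatrix (submatrix A I UNIV) UNIV J)"
  then have ij: "i < card {i. i < dim_row A \<and> i \<in> I}" "j < card {j. j < dim_col A \<and> j \<in> J}"
    by (simp_all add: dim_submatrix)
  have ij': "i < card {a. a < dim_row (submatrix A I UNIV) \<and> a \<in> UNIV}"
    "j < card {b. b < dim_col (submatrix A I UNIV) \<and> b \<in> J}"
    using ij by (simp_all add: dim_submatrix)
  have j'': "pick J j < card {b. b < dim_col A \<and> b \<in> UNIV}" using pick_le[OF ij(2)] by simp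
  show "submatrix A I J $$ (i, j) = submatrix (submatrix A I UNIV) UNIV J $$ (i, j)"
    unfolding submatrix_index[OF ij] submatrix_index[OF ij'] pick_UNIV
    using submatrix_index[OF ij(1) j''] by (simp add: pick_UNIV)
qed (simp_all add: dim_submatrix)

lemma submatrix_mult:
  assumes A: "A \<in> carrier_mat m n" and B: "B \<in> carrier_mat n p"
  shows "submatrix (A * B) I J = submatrix A I UNIV * submatrix B UNIV J"
proof (rule eq_matI)
  have cU: "{k. k < n \<and> k \<in> (UNIV::nat set)} = {..<n}" by auto
  fix i j assume "i < dim_row (submatrix A I UNIV * submatrix B UNIV J)"
    and "j < dim_col (submatrix A I UNIV * submatrix B UNIV J)"
  then have i: "i < card {i. i < m \<and> i \<in> I}" and j: "j < card {j. j < p \<and> j \<in> J}"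
    using A B by (simp_all add: dim_submatrix)
  have "submatrix (A * B) I J $$ (i, j) = row A (pick I i) \<bullet> col B (pick J j)"
    using A B i j pick_le[OF i] pick_le[OF j] by (simp add: submatrix_index)
  also have "\<dots> = (submatrix A I UNIV * submatrix B UNIV J) $$ (i, j)"
    using A B i j pick_le[OF i] pick_le[OF j]
    by (simp add: dim_submatrix submatrix_index scalar_prod_def cU pick_UNIV)
  finally show "submatrix (A * B) I J $$ (i, j) = (submatrix A I UNIV * submatrix B UNIV J) $$ (i, j)" .
qed (use A B in \<open>simp_all add: dim_submatrix\<close>)

lemma compound_mult:
  fixes A B :: "'a::comm_ring_1 mat"
  assumes A: "A \<in> carrier_mat n n" and B: "B \<in> carrier_mat n n"
    and I: "I \<in> dsubsets n d" and J: "J \<in> dsubsets n d"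
  shows "compound (A * B) I J = (\<Sum>K\<in>dsubsets n d. compound A I K * compound B K J)"
proof -
  have cU: "{k. k < n \<and> k \<in> (UNIV::nat set)} = {..<n}" by auto
  have AI: "submatrix A I UNIV \<in> carrier_mat d n" and BJ: "submatrix B UNIV J \<in> carrier_mat n d"
    using A B dsubsetsD[OF I] dsubsetsD[OF J] cU by (auto simp: dim_submatrix)
  show ?thesis
    unfolding compound_def submatrix_mult[OF A B] cauchy_binet[OF AI BJ]
    by (simp add: submatrix_split_rows[symmetric] submatrix_split[symmetric])
qed

lemma det_zero_row:
  fixes M :: "'a::comm_ring_1 mat"
  assumes M: "M \<in> carrier_mat d d" and a: "a < d" and z: "\<And>b. b < d \<Longrightarrow> M $$ (a,b) = 0"
  shows "det M = 0"
proof -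
  have "\<And>p. p permutes {0..<d} \<Longrightarrow> (\<Prod>i = 0..<d. M $$ (i, p i)) = 0"
    by (rule prod_zero) (use a z permutes_in_image in fastforce)+
  thus ?thesis unfolding det_def'[OF M] by simp
qed

lemma det_identity_rows_except:
  fixes M :: "'a::comm_ring_1 mat"
  assumes M: "M \<in> carrier_mat d d" and k: "k < d"
    and r: "\<And>i j. i < d \<Longrightarrow> j < d \<Longrightarrow> i \<noteq> k \<Longrightarrow> M $$ (i,j) = (if i = j then 1 else 0)"
  shows "det M = M $$ (k,k)"
proof -
  have z: "(\<Prod>i = 0..<d. M $$ (i, p i)) = 0" if p: "p permutes {0..<d}" "p \<noteq> id" for p
  proof -
    have "\<exists>i<d. i \<noteq> k \<and> p i \<noteq> i"
    proof (rule ccontr)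
      assume "\<not> ?thesis"
      hence fix1: "\<And>i. i < d \<Longrightarrow> i \<noteq> k \<Longrightarrow> p i = i" by auto
      have "p k = k"
      proof (rule ccontr)
        assume pk: "p k \<noteq> k"
        have "p k < d" using p(1) k permutes_in_image by fastforce
        hence "p (p k) = p k" using fix1 pk by auto
        with pk show False using permutes_inj[OF p(1)] by (auto simp: inj_def)
      qed
      hence "\<And>i. p i = i" using fix1 p(1) unfolding permutes_def by (metis atLeastLessThan_iff zero_le)
      with p(2) show False by auto
    qed
    then obtain i where i: "i < d" "i \<noteq> k" "p i \<noteq> i" by auto
    have "M $$ (i, p i) = 0" using r[OF i(1) _ i(2)] i(3) p(1) permutes_in_image i(1) by fastforce
    thus ?thesis by (intro prod_zero) (use i in auto)
  qed
  have "det M = (\<Sum>p\<in>{id}. signof p * (\<Prod>i = 0..<d. M $$ (i, p i)))"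
    unfolding det_def'[OF M]
    by (rule sum.mono_neutral_right) (auto simp: finite_permutations permutes_id z)
  also have "\<dots> = (\<Prod>i = 0..<d. M $$ (i, i))" by simp
  also have "\<dots> = (\<Prod>i \<in> {k}. M $$ (i, i))"
    by (rule prod.mono_neutral_right) (use k r in auto)
  finally show ?thesis by simp
qed

lemma compound_identity_rows:
  fixes A :: "'a::comm_ring_1 mat"
  assumes A: "A \<in> carrier_mat n n" and I: "I \<in> dsubsets n d" and J: "J \<in> dsubsets n d"
    and r: "\<And>i j. i \<in> I \<Longrightarrow> j < n \<Longrightarrow> A $$ (i,j) = (if i = j then 1 else 0)"
  shows "compound A I J = (if I = J then 1 else 0)"
proof -
  note ID = dsubsetsD[OF I] and JD = dsubsetsD[OF J]
  have S: "submatrix A I J \<in> carrier_mat d d" using A ID JD by (auto simp: dim_submatrix)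
  have Si: "submatrix A I J $$ (a,b) = (if pick I a = pick J b then 1 else 0)"
    if ab: "a < d" "b < d" for a b
    using A ID JD ab r pick_in_set_le[of a I] pick_in_set_le[of b J] by (subst submatrix_index) auto
  show ?thesis
  proof (cases "I = J")
    case True
    have "submatrix A I J = 1\<^sub>m d"
      by (rule eq_matI) (use S Si True inj_on_pick[of J] JD in \<open>auto simp: inj_on_def\<close>)
    thus ?thesis unfolding compound_def using True by simp
  next
    case False
    have "\<not> I \<subseteq> J" using False card_subset_eq[OF JD(3)] ID JD by auto
    then obtain i where i: "i \<in> I" "i \<notin> J" by auto
    define a where "a = card {x\<in>I. x < i}"
    have "card {x\<in>I. x < i} < card I"
      by (rule psubset_card_mono[OF ID(3)]) (use i in auto)
    hence a: "a < d" unfolding a_def using ID by simp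
    have pa: "pick I a = i" unfolding a_def by (rule pick_card_in_set[OF i(1)])
    have "det (submatrix A I J) = 0"
    proof (rule det_zero_row[OF S a])
      fix b assume b: "b < d"
      have "pick J b \<in> J" using pick_in_set_le JD b by auto
      thus "submatrix A I J $$ (a, b) = 0" using Si[OF a b] pa i by auto
    qed
    thus ?thesis unfolding compound_def using False by simp
  qed
qed

lemma compound_one:
  assumes I: "I \<in> dsubsets n d" and J: "J \<in> dsubsets n d"
  shows "compound (1\<^sub>m n :: 'a::comm_ring_1 mat) I J = (if I = J then 1 else 0)"
  by (rule compound_identity_rows[OF one_carrier_mat I J]) (use dsubsetsD(1)[OF I] in auto)

section \<open>Linear maps between exterior powers\<close>

text \<open>As in \<open>ext_pow_iso\<close>, a vector of \<open>\<And>\<^sup>d F\<^sup>n\<close> is a function on \<open>dsubsets n d\<close>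
  (its coordinates in the basis \<open>e\<^sub>I\<close>) and a linear map is a function \<open>D \<Rightarrow> D \<Rightarrow> 'a\<close>;
  \<open>mat_mult_on\<close> and \<open>mat_vec_on\<close> are the matrix operations for an index set \<open>D\<close>.\<close>

definition mat_mult_on :: "'i set \<Rightarrow> ('i \<Rightarrow> 'i \<Rightarrow> 'a::comm_ring_1) \<Rightarrow> ('i \<Rightarrow> 'i \<Rightarrow> 'a) \<Rightarrow> 'i \<Rightarrow> 'i \<Rightarrow> 'a"
  where "mat_mult_on D F G I J = (\<Sum>K\<in>D. F I K * G K J)"

definition mat_vec_on :: "'i set \<Rightarrow> ('i \<Rightarrow> 'i \<Rightarrow> 'a::comm_ring_1) \<Rightarrow> ('i \<Rightarrow> 'a) \<Rightarrow> 'i \<Rightarrow> 'a"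
  where "mat_vec_on D F w I = (\<Sum>K\<in>D. F I K * w K)"

definition delta_mat :: "'i \<Rightarrow> 'i \<Rightarrow> 'a::comm_ring_1"
  where "delta_mat I J = (if I = J then 1 else 0)"

lemma mat_vec_on_mat_vec_on: "mat_vec_on D F (mat_vec_on D G w) I = mat_vec_on D (mat_mult_on D F G) w I"
proof -
  have "mat_vec_on D F (mat_vec_on D G w) I = (\<Sum>K\<in>D. \<Sum>L\<in>D. F I K * (G K L * w L))"
    unfolding mat_vec_on_def by (simp add: sum_distrib_left)
  also have "\<dots> = (\<Sum>L\<in>D. \<Sum>K\<in>D. F I K * (G K L * w L))" by (rule sum.swap)
  also have "\<dots> = mat_vec_on D (mat_mult_on D F G) w I"
    unfolding mat_vec_on_def mat_mult_on_def by (simp add: sum_distrib_right mult.assoc)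
  finally show ?thesis .
qed

lemma mat_mult_on_assoc: "mat_mult_on D (mat_mult_on D F G) H I J = mat_mult_on D F (mat_mult_on D G H) I J"
proof -
  have "mat_mult_on D (mat_mult_on D F G) H I J = (\<Sum>L\<in>D. \<Sum>K\<in>D. F I K * (G K L * H L J))"
    unfolding mat_mult_on_def by (simp add: sum_distrib_right mult.assoc)
  also have "\<dots> = (\<Sum>K\<in>D. \<Sum>L\<in>D. F I K * (G K L * H L J))" by (rule sum.swap)
  also have "\<dots> = mat_mult_on D F (mat_mult_on D G H) I J"
    unfolding mat_mult_on_def by (simp add: sum_distrib_left)
  finally show ?thesis .
qed

lemma mat_vec_on_cong:
  "(\<And>K. K \<in> D \<Longrightarrow> F I K = G I K) \<Longrightarrow> (\<And>K. K \<in> D \<Longrightarrow> w K = w' K) \<Longrightarrow>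
   mat_vec_on D F w I = mat_vec_on D G w' I"
  unfolding mat_vec_on_def by (rule sum.cong) auto

lemma mat_mult_on_cong:
  "(\<And>K. K \<in> D \<Longrightarrow> F I K = F' I K) \<Longrightarrow> (\<And>K. K \<in> D \<Longrightarrow> G K J = G' K J) \<Longrightarrow>
   mat_mult_on D F G I J = mat_mult_on D F' G' I J"
  unfolding mat_mult_on_def by (rule sum.cong) auto

lemma mat_vec_on_delta:
  assumes "finite D" "I \<in> D" shows "mat_vec_on D delta_mat w I = w I"
proof -
  have "mat_vec_on D delta_mat w I = (\<Sum>K\<in>D. if I = K then w K else 0)"
    unfolding mat_vec_on_def delta_mat_def by (rule sum.cong) auto
  also have "\<dots> = w I" using assms by simp
  finally show ?thesis .
qed

lemma mat_mult_on_delta_right: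
  assumes "finite D" "J \<in> D" shows "mat_mult_on D F delta_mat I J = F I J"
proof -
  have "mat_mult_on D F delta_mat I J = (\<Sum>K\<in>D. if K = J then F I K else 0)"
    unfolding mat_mult_on_def delta_mat_def by (rule sum.cong) auto
  also have "\<dots> = F I J" using assms by simp
  finally show ?thesis .
qed

lemma mat_mult_on_delta_left:
  assumes "finite D" "I \<in> D" shows "mat_mult_on D delta_mat F I J = F I J"
proof -
  have "mat_mult_on D delta_mat F I J = (\<Sum>K\<in>D. if I = K then F K J else 0)"
    unfolding mat_mult_on_def delta_mat_def by (rule sum.cong) auto
  also have "\<dots> = F I J" using assms by simp
  finally show ?thesis .
qed

lemma mat_vec_on_inverse:
  assumes fin: "finite D" and inv: "\<And>J. J \<in> D \<Longrightarrow> mat_mult_on D P Q I J = delta_mat I J"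
    and I: "I \<in> D"
  shows "mat_vec_on D P (mat_vec_on D Q w) I = w I"
proof -
  have "mat_vec_on D P (mat_vec_on D Q w) I = mat_vec_on D (mat_mult_on D P Q) w I"
    by (rule mat_vec_on_mat_vec_on)
  also have "\<dots> = mat_vec_on D delta_mat w I" by (rule mat_vec_on_cong) (use inv in auto)
  also have "\<dots> = w I" by (rule mat_vec_on_delta[OF fin I])
  finally show ?thesis .
qed

lemma mat_vec_on_intertwine:
  assumes int: "\<And>I J. I \<in> D \<Longrightarrow> J \<in> D \<Longrightarrow> mat_mult_on D X F I J = mat_mult_on D G X I J"
    and \<omega>: "\<And>I. I \<in> D \<Longrightarrow> \<omega> I = mat_vec_on D F \<theta> I" and I: "I \<in> D"
  shows "mat_vec_on D X \<omega> I = mat_vec_on D G (mat_vec_on D X \<theta>) I"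
proof -
  have "mat_vec_on D X \<omega> I = mat_vec_on D X (mat_vec_on D F \<theta>) I"
    by (rule mat_vec_on_cong) (use \<omega> in auto)
  also have "\<dots> = mat_vec_on D (mat_mult_on D X F) \<theta> I" by (rule mat_vec_on_mat_vec_on)
  also have "\<dots> = mat_vec_on D (mat_mult_on D G X) \<theta> I" by (rule mat_vec_on_cong) (use int I in auto)
  also have "\<dots> = mat_vec_on D G (mat_vec_on D X \<theta>) I" by (rule mat_vec_on_mat_vec_on[symmetric])
  finally show ?thesis .
qed

lemma mat_mult_on_intertwine_inverse:
  assumes fin: "finite D"
    and PQ: "\<And>I J. I \<in> D \<Longrightarrow> J \<in> D \<Longrightarrow> mat_mult_on D P Q I J = delta_mat I J"
    and QP: "\<And>I J. I \<in> D \<Longrightarrow> J \<in> D \<Longrightarrow> mat_mult_on D Q P I J = delta_mat I J"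
    and int: "\<And>I J. I \<in> D \<Longrightarrow> J \<in> D \<Longrightarrow> mat_mult_on D P F I J = mat_mult_on D G P I J"
    and I: "I \<in> D" and J: "J \<in> D"
  shows "mat_mult_on D Q G I J = mat_mult_on D F Q I J"
proof -
  have "mat_mult_on D Q G I J = mat_mult_on D (mat_mult_on D Q G) delta_mat I J"
    by (rule mat_mult_on_delta_right[OF fin J, symmetric])
  also have "\<dots> = mat_mult_on D (mat_mult_on D Q G) (mat_mult_on D P Q) I J"
    by (rule mat_mult_on_cong) (use PQ J in auto)
  also have "\<dots> = mat_mult_on D (mat_mult_on D (mat_mult_on D Q G) P) Q I J"
    by (rule mat_mult_on_assoc[symmetric])
  also have "\<dots> = mat_mult_on D (mat_mult_on D Q (mat_mult_on D P F)) Q I J"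
    by (rule mat_mult_on_cong) (auto simp: mat_mult_on_assoc int cong: mat_mult_on_cong)
  also have "\<dots> = mat_mult_on D (mat_mult_on D (mat_mult_on D Q P) F) Q I J"
    by (rule mat_mult_on_cong) (auto simp: mat_mult_on_assoc)
  also have "\<dots> = mat_mult_on D (mat_mult_on D delta_mat F) Q I J"
    by (rule mat_mult_on_cong, rule mat_mult_on_cong) (use QP I in auto)
  also have "\<dots> = mat_mult_on D F Q I J"
    by (rule mat_mult_on_cong) (use mat_mult_on_delta_left[OF fin I] in auto)
  finally show ?thesis .
qed

lemma compound_conj:
  fixes P Q A :: "'a::comm_ring_1 mat"
  assumes P: "P \<in> carrier_mat n n" and Q: "Q \<in> carrier_mat n n" and A: "A \<in> carrier_mat n n"
    and QP: "Q * P = 1\<^sub>m n" and I: "I \<in> dsubsets n d" and J: "J \<in> dsubsets n d"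
  shows "mat_mult_on (dsubsets n d) (compound P) (compound A) I J
       = mat_mult_on (dsubsets n d) (compound (P * A * Q)) (compound P) I J"
proof -
  have PA: "P * A \<in> carrier_mat n n" using P A by auto
  have PAQ: "P * A * Q \<in> carrier_mat n n" using P A Q by auto
  have "P * A * Q * P = P * A"
    using assoc_mult_mat[OF PA Q P] QP right_mult_one_mat[OF PA] by simp
  then show ?thesis
    unfolding mat_mult_on_def compound_mult[OF P A I J, symmetric]
      compound_mult[OF PAQ P I J, symmetric] by simp
qed

lemma compound_inverse:
  fixes P Q :: "'a::comm_ring_1 mat"
  assumes "P \<in> carrier_mat n n" "Q \<in> carrier_mat n n" "P * Q = 1\<^sub>m n"
    and "I \<in> dsubsets n d" "J \<in> dsubsets n d"
  shows "mat_mult_on (dsubsets n d) (compound P) (compound Q) I J = delta_mat I J"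
  using assms by (simp add: mat_mult_on_def compound_mult[symmetric] compound_one delta_mat_def)

definition compound_minus_one :: "'a::comm_ring_1 mat \<Rightarrow> nat set \<Rightarrow> nat set \<Rightarrow> 'a" where
  "compound_minus_one A I J = compound A I J - delta_mat I J"

definition in_ext_image :: "nat \<Rightarrow> nat \<Rightarrow> 'a::comm_ring_1 mat \<Rightarrow> (nat set \<Rightarrow> 'a) \<Rightarrow> bool" where
  "in_ext_image n d A \<omega> \<longleftrightarrow>
     (\<exists>\<theta>. \<forall>I\<in>dsubsets n d. \<omega> I = mat_vec_on (dsubsets n d) (compound_minus_one A) \<theta> I)"

lemma in_ext_image_intertwine:
  fixes A B :: "'a::comm_ring_1 mat"
  assumes int: "\<And>I J. I \<in> dsubsets n d \<Longrightarrow> J \<in> dsubsets n d \<Longrightarrow>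
      mat_mult_on (dsubsets n d) X (compound A) I J = mat_mult_on (dsubsets n d) (compound B) X I J"
    and \<omega>: "in_ext_image n d A \<omega>"
  shows "in_ext_image n d B (mat_vec_on (dsubsets n d) X \<omega>)"
proof -
  let ?D = "dsubsets n d"
  have minus_one: "mat_mult_on ?D X (compound_minus_one A) I J
      = mat_mult_on ?D (compound_minus_one B) X I J" if I: "I \<in> ?D" and J: "J \<in> ?D" for I J
  proof -
    have "mat_mult_on ?D X (compound_minus_one A) I J
        = mat_mult_on ?D X (compound A) I J - mat_mult_on ?D X delta_mat I J"
      unfolding mat_mult_on_def compound_minus_one_def by (simp add: right_diff_distrib sum_subtractf)
    also have "\<dots> = mat_mult_on ?D (compound B) X I J - mat_mult_on ?D delta_mat X I J"
      using finite_dsubsets I J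
      by (simp add: int mat_mult_on_delta_left mat_mult_on_delta_right)
    also have "\<dots> = mat_mult_on ?D (compound_minus_one B) X I J"
      unfolding mat_mult_on_def compound_minus_one_def by (simp add: left_diff_distrib sum_subtractf)
    finally show ?thesis .
  qed
  obtain \<theta> where "\<forall>I\<in>?D. \<omega> I = mat_vec_on ?D (compound_minus_one A) \<theta> I"
    using \<omega> unfolding in_ext_image_def by blast
  then have "\<forall>I\<in>?D. mat_vec_on ?D X \<omega> I
      = mat_vec_on ?D (compound_minus_one B) (mat_vec_on ?D X \<theta>) I"
    using mat_vec_on_intertwine[OF minus_one] by blast
  then show ?thesis unfolding in_ext_image_def by blast
qed

lemma in_ext_image_conj:
  fixes P Q A :: "'a::comm_ring_1 mat"
  assumes "P \<in> carrier_mat n n" "Q \<in> carrier_mat n n" "A \<in> carrier_mat n n" "Q * P = 1\<^sub>m n"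
    and "in_ext_image n d A \<omega>"
  shows "in_ext_image n d (P * A * Q) (mat_vec_on (dsubsets n d) (compound P) \<omega>)"
  using assms compound_conj[OF assms(1-4)] by (intro in_ext_image_intertwine) auto

section \<open>Normal forms of families of vectors\<close>

lemma foldr_smult_add_vec:
  assumes "\<And>t. t \<in> set xs \<Longrightarrow> v t \<in> carrier_vec n"
  shows "foldr (\<lambda>i acc. c i \<cdot>\<^sub>v v i + acc) xs (0\<^sub>v n) = vec n (\<lambda>j. \<Sum>i\<leftarrow>xs. c i * v i $ j)"
  using assms
proof (induction xs)
  case (Cons x xs)
  have vx: "v x \<in> carrier_vec n" using Cons.prems by auto
  show ?case using Cons by simp (rule eq_vecI, auto simp: carrier_vecD[OF vx])
qed (auto intro!: eq_vecI)

lemma mat_of_cols_mult_vec: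
  "c \<in> carrier_vec m \<Longrightarrow>
   mat_of_cols n (map v [0..<m]) *\<^sub>v c = vec n (\<lambda>j. \<Sum>t<m. v t $ j * c $ t)"
  by (auto intro!: eq_vecI simp: mat_of_cols_def scalar_prod_def atLeast0LessThan)

lemma lin_indep_family_iff_kernel:
  fixes v :: "nat \<Rightarrow> 'a::field vec"
  assumes v: "\<And>t. t < m \<Longrightarrow> v t \<in> carrier_vec n"
  shows "lin_indep_family n m v \<longleftrightarrow>
    (\<forall>c\<in>carrier_vec m. mat_of_cols n (map v [0..<m]) *\<^sub>v c = 0\<^sub>v n \<longrightarrow> c = 0\<^sub>v m)"
proof -
  have lincomb: "foldr (\<lambda>i acc. c i \<cdot>\<^sub>v v i + acc) [0..<m] (0\<^sub>v n)
      = mat_of_cols n (map v [0..<m]) *\<^sub>v vec m c" for c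
  proof -
    have "foldr (\<lambda>i acc. c i \<cdot>\<^sub>v v i + acc) [0..<m] (0\<^sub>v n)
        = vec n (\<lambda>j. \<Sum>i\<leftarrow>[0..<m]. c i * v i $ j)"
      by (rule foldr_smult_add_vec) (use v in auto)
    also have "\<dots> = vec n (\<lambda>j. \<Sum>t<m. v t $ j * vec m c $ t)"
      by (rule eq_vecI) (auto simp: interv_sum_list_conv_sum_set_nat atLeast0LessThan mult.commute)
    finally show ?thesis by (simp add: mat_of_cols_mult_vec)
  qed
  show ?thesis
  proof
    assume L: "lin_indep_family n m v"
    show "\<forall>c\<in>carrier_vec m. mat_of_cols n (map v [0..<m]) *\<^sub>v c = 0\<^sub>v n \<longrightarrow> c = 0\<^sub>v m"
    proof (intro ballI impI)
      fix c :: "'a vec" assume c: "c \<in> carrier_vec m"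
        and z: "mat_of_cols n (map v [0..<m]) *\<^sub>v c = 0\<^sub>v n"
      have "vec m (\<lambda>t. c $ t) = c" using c by (auto intro!: eq_vecI)
      then have "foldr (\<lambda>i acc. c $ i \<cdot>\<^sub>v v i + acc) [0..<m] (0\<^sub>v n) = 0\<^sub>v n"
        using z unfolding lincomb by simp
      then have "\<forall>i<m. c $ i = 0" using L unfolding lin_indep_family_def by blast
      then show "c = 0\<^sub>v m" using c by (auto intro!: eq_vecI)
    qed
  next
    assume R: "\<forall>c\<in>carrier_vec m. mat_of_cols n (map v [0..<m]) *\<^sub>v c = 0\<^sub>v n \<longrightarrow> c = 0\<^sub>v m"
    show "lin_indep_family n m v" unfolding lin_indep_family_def
    proof (intro conjI allI impI)
      fix c :: "nat \<Rightarrow> 'a" and i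
      assume "foldr (\<lambda>i acc. c i \<cdot>\<^sub>v v i + acc) [0..<m] (0\<^sub>v n) = 0\<^sub>v n" and i: "i < m"
      then have "vec m c = 0\<^sub>v m" using R unfolding lincomb by auto
      then show "c i = 0" using i by (metis index_vec index_zero_vec(1))
    qed (use v in auto)
  qed
qed

lemma lin_indep_family_single:
  fixes x :: "'a::field vec"
  assumes x: "x \<in> carrier_vec n" "x \<noteq> 0\<^sub>v n"
  shows "lin_indep_family n 1 (\<lambda>_. x)"
  unfolding lin_indep_family_def
proof (intro conjI allI impI)
  fix c :: "nat \<Rightarrow> 'a" and i :: nat
  assume "foldr (\<lambda>i acc. c i \<cdot>\<^sub>v x + acc) [0..<1] (0\<^sub>v n) = 0\<^sub>v n" and i: "i < 1"
  then have cx: "c 0 \<cdot>\<^sub>v x = 0\<^sub>v n" using x by simp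
  obtain j where j: "j < n" "x $ j \<noteq> 0" using x by (metis eq_vecI carrier_vecD index_zero_vec)
  have "c 0 * x $ j = 0" using arg_cong[OF cx, of "\<lambda>y. y $ j"] j x by simp
  then show "c i = 0" using i j by simp
qed (use x in auto)

lemma gauss_jordan_independent:
  fixes v :: "nat \<Rightarrow> 'a::field vec"
  assumes indep: "lin_indep_family n m v"
  shows "\<exists>P Q p. P \<in> carrier_mat n n \<and> Q \<in> carrier_mat n n \<and> P * Q = 1\<^sub>m n \<and> Q * P = 1\<^sub>m n \<and>
    inj_on p {0..<m} \<and> (\<forall>t<m. p t < n \<and> P *\<^sub>v v t = unit_vec n (p t))"
proof -
  define G where "G = mat_of_cols n (map v [0..<m])"
  have v: "\<And>t. t < m \<Longrightarrow> v t \<in> carrier_vec n" using indep unfolding lin_indep_family_def by blast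
  have G: "G \<in> carrier_mat n m" unfolding G_def by (metis length_map length_upt mat_of_cols_carrier(1) minus_nat.diff_0)
  have colG: "\<And>t. t < m \<Longrightarrow> col G t = v t" unfolding G_def using v by simp
  have ker: "\<And>c. c \<in> carrier_vec m \<Longrightarrow> G *\<^sub>v c = 0\<^sub>v n \<Longrightarrow> c = 0\<^sub>v m"
    using indep lin_indep_family_iff_kernel[of m v n, OF v] unfolding G_def by blast
  obtain R where gR: "gauss_jordan_single G = R" by auto
  note gj = gauss_jordan_single[OF G gR]
  obtain P Q where PQ: "R = P * G" "P \<in> carrier_mat n n" "Q \<in> carrier_mat n n" "P * Q = 1\<^sub>m n" "Q * P = 1\<^sub>m n"
    using gj(4) by blast
  have R: "R \<in> carrier_mat n m" by (rule gj(2))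
  obtain f where piv: "pivot_fun R f m" using gj(3) R unfolding row_echelon_form_def by auto
  have dimR: "dim_row R = n" using R by auto
  note pD = pivot_funD[OF dimR piv]
  txt \<open>A trivial kernel forces a pivot in every column.\<close>
  have all: "snd ` set (pivot_positions R) = {0..<m}"
  proof (rule ccontr)
    assume ne: "snd ` set (pivot_positions R) \<noteq> {0..<m}"
    note fb = find_base_vector[OF gj(3) R ne]
    have "G *\<^sub>v find_base_vector R = 0\<^sub>v n" using gj(1)[OF fb(1)] fb(3) by simp
    hence "find_base_vector R = 0\<^sub>v m" using ker fb(1) by auto
    with fb(2) show False ..
  qed
  have "\<exists>i. i < n \<and> f i = t" if "t < m" for t
  proof -
    have "t \<in> snd ` set (pivot_positions R)" using all that by auto
    then show ?thesis unfolding pivot_positions[OF R piv] by auto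
  qed
  then obtain p where p: "\<And>t. t < m \<Longrightarrow> p t < n \<and> f (p t) = t" by metis
  have inj: "inj_on p {0..<m}" by (rule inj_onI) (metis atLeastLessThan_iff p)
  have colR: "col R t = unit_vec n (p t)" if t: "t < m" for t
  proof (rule eq_vecI)
    fix i assume "i < dim_vec (unit_vec n (p t))"
    then have i: "i < n" by simp
    have ft: "f (p t) < m" using p[OF t] t by simp
    show "col R t $ i = unit_vec n (p t) $ i"
    proof (cases "i = p t")
      case True
      then show ?thesis using pD(4)[of "p t"] p[OF t] ft i R t by auto
    next
      case False
      then show ?thesis using pD(5)[of "p t" i] p[OF t] ft i R t by auto
    qed
  qed (use R in auto)
  have "P *\<^sub>v v t = unit_vec n (p t)" if t: "t < m" for t
    using col_mult2[OF PQ(2) G t] colR[OF t] colG[OF t] PQ(1) by simp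
  with PQ(2-5) inj p show ?thesis by blast
qed

lemma pivot_fun_identity_block:
  assumes R: "R \<in> carrier_mat n (Suc d)" and piv: "pivot_fun R f (Suc d)"
    and i: "d \<le> i" "i < n" and t: "t < Suc d" and nz: "R $$ (i, t) \<noteq> 0"
    and s: "s < Suc d" and t': "t' < Suc d"
  shows "R $$ (s, t') = (if s = t' then 1 else 0)"
proof -
  have dimR: "dim_row R = n" using R by auto
  note pD = pivot_funD[OF dimR piv]
  have "f i \<noteq> Suc d"
  proof
    assume "f i = Suc d"
    then have "R $$ (i, t) = 0" using pD(2)[OF i(2), of t] t by simp
    with nz show False ..
  qed
  then have fi: "f i < Suc d" using pD(1)[OF i(2)] by simp
  have "f (0 + i) = Suc d \<or> i + f 0 \<le> f (0 + i)" by (rule pivot_bound[OF dimR piv]) (use i in simp)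
  then have "i \<le> f i" using fi by auto
  then have i_d: "i = d" using fi i(1) by linarith
  have "f i = i" using \<open>i \<le> f i\<close> fi i(1) by linarith
  then have f_d: "f d = d" using i_d by simp
  have f_id: "f r = r" if r: "r \<le> d" for r
  proof -
    have "f (r + (d - r)) = Suc d \<or> (d - r) + f r \<le> f (r + (d - r))"
      by (rule pivot_bound[OF dimR piv]) (use r i i_d f_d in simp)
    moreover have "f (0 + r) = Suc d \<or> r + f 0 \<le> f (0 + r)"
      by (rule pivot_bound[OF dimR piv]) (use r i i_d f_d in simp)
    ultimately show ?thesis using f_d r by auto
  qed
  have sn: "s < n" "t' < n" using s t' i i_d by auto
  have ft: "f t' = t'" using f_id t' by simp
  show ?thesis
  proof (cases "s = t'")
    case True
    then show ?thesis using pD(4)[OF sn(2)] ft t' by simp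
  next
    case False
    then show ?thesis using pD(5)[OF sn(2) _ sn(1)] ft t' by simp
  qed
qed

lemma gauss_jordan_dependent:
  fixes v :: "nat \<Rightarrow> 'a::field vec"
  assumes v: "\<And>t. t < Suc d \<Longrightarrow> v t \<in> carrier_vec n"
    and dep: "\<not> lin_indep_family n (Suc d) v"
  shows "\<exists>P Q. P \<in> carrier_mat n n \<and> Q \<in> carrier_mat n n \<and> P * Q = 1\<^sub>m n \<and> Q * P = 1\<^sub>m n \<and>
    (\<forall>t<Suc d. \<forall>i. d \<le> i \<longrightarrow> i < n \<longrightarrow> (P *\<^sub>v v t) $ i = 0)"
proof -
  define G where "G = mat_of_cols n (map v [0..<Suc d])"
  have G: "G \<in> carrier_mat n (Suc d)" unfolding G_def
    by (metis length_map length_upt mat_of_cols_carrier(1) minus_nat.diff_0)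
  have colG: "\<And>t. t < Suc d \<Longrightarrow> col G t = v t" unfolding G_def using v by (simp del: upt_Suc)
  obtain c where c: "c \<in> carrier_vec (Suc d)" "G *\<^sub>v c = 0\<^sub>v n" "c \<noteq> 0\<^sub>v (Suc d)"
    using dep lin_indep_family_iff_kernel[of "Suc d" v n, OF v] unfolding G_def by blast
  obtain R where gR: "gauss_jordan_single G = R" by auto
  note gj = gauss_jordan_single[OF G gR]
  obtain P Q where PQ: "R = P * G" "P \<in> carrier_mat n n" "Q \<in> carrier_mat n n" "P * Q = 1\<^sub>m n" "Q * P = 1\<^sub>m n"
    using gj(4) by blast
  have R: "R \<in> carrier_mat n (Suc d)" by (rule gj(2))
  obtain f where piv: "pivot_fun R f (Suc d)" using gj(3) R unfolding row_echelon_form_def by auto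
  have "P *\<^sub>v 0\<^sub>v n = 0\<^sub>v n" by (rule eq_vecI) (use PQ(2) in \<open>auto simp: scalar_prod_def\<close>)
  then have Rc: "R *\<^sub>v c = 0\<^sub>v n"
    using PQ(1) assoc_mult_mat_vec[OF PQ(2) G c(1)] c(2) by simp
  have zero: "R $$ (i, t) = 0" if it: "d \<le> i" "i < n" "t < Suc d" for i t
  proof (rule ccontr)
    assume "R $$ (i, t) \<noteq> 0"
    note Rid = pivot_fun_identity_block[OF R piv it this]
    have "c $ s = 0" if s: "s < Suc d" for s
    proof -
      have "(R *\<^sub>v c) $ s = (\<Sum>t'<Suc d. R $$ (s, t') * c $ t')"
        using R c(1) s it by (auto simp: scalar_prod_def atLeast0LessThan)
      also have "\<dots> = (\<Sum>t'<Suc d. if s = t' then c $ t' else 0)"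
        by (rule sum.cong[OF refl]) (use Rid[OF s] in auto)
      also have "\<dots> = c $ s" using s by simp
      finally show ?thesis using Rc s it by simp
    qed
    then have "c = 0\<^sub>v (Suc d)" by (intro eq_vecI) (use c(1) in auto)
    with c(3) show False ..
  qed
  have "(P *\<^sub>v v t) $ i = 0" if ti: "t < Suc d" "d \<le> i" "i < n" for t i
  proof -
    have "P *\<^sub>v v t = col R t" using col_mult2[OF PQ(2) G ti(1)] colG[OF ti(1)] PQ(1) by simp
    then show ?thesis using zero[OF ti(2,3,1)] R ti by simp
  qed
  with PQ(2-5) show ?thesis by blast
qed

section \<open>Maps moving every vector along a fixed direction\<close>

text \<open>Besides \<open>\<mu> \<noteq> 1\<close>, this is the only property of a reflection with reflection
  vector \<open>\<gamma>\<close> that the argument uses.\<close>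
definition moves_along :: "nat \<Rightarrow> 'a::comm_ring_1 mat \<Rightarrow> 'a vec \<Rightarrow> bool" where
  "moves_along n A \<gamma> \<longleftrightarrow> (\<forall>v\<in>carrier_vec n. \<exists>c. (A - 1\<^sub>m n) *\<^sub>v v = c \<cdot>\<^sub>v \<gamma>)"

lemma mult_unit_vec_index:
  fixes M :: "'a::comm_ring_1 mat"
  assumes "M \<in> carrier_mat n n" "i < n" "j < n"
  shows "(M *\<^sub>v unit_vec n j) $ i = M $$ (i,j)"
proof -
  have "row M i \<bullet> unit_vec n j = (\<Sum>k\<in>{0..<n}. row M i $ k * unit_vec n j $ k)"
    unfolding scalar_prod_def by simp
  also have "\<dots> = (\<Sum>k\<in>{0..<n}. if j = k then M $$ (i,k) else 0)"
    by (rule sum.cong[OF refl]) (use assms in auto)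
  also have "\<dots> = M $$ (i,j)" using assms by simp
  finally show ?thesis using assms by simp
qed

lemma minus_one_mult_mat_vec:
  fixes M :: "'a::comm_ring_1 mat"
  assumes "M \<in> carrier_mat n n" "v \<in> carrier_vec n"
  shows "(M - 1\<^sub>m n) *\<^sub>v v = M *\<^sub>v v - v"
  using assms by (simp add: minus_mult_distrib_mat_vec)

lemma conj_mult_mat_vec:
  fixes P A Q :: "'a::comm_ring_1 mat"
  assumes "P \<in> carrier_mat n n" "A \<in> carrier_mat n n" "Q \<in> carrier_mat n n" "v \<in> carrier_vec n"
  shows "P * A * Q *\<^sub>v v = P *\<^sub>v (A *\<^sub>v (Q *\<^sub>v v))"
  using assms by (simp add: assoc_mult_mat_vec[of _ n n _ n])

lemma moves_along_identity_row:
  fixes A :: "'a::comm_ring_1 mat"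
  assumes A: "A \<in> carrier_mat n n" and \<gamma>: "\<gamma> \<in> carrier_vec n" and mv: "moves_along n A \<gamma>"
    and i: "i < n" "\<gamma> $ i = 0" and j: "j < n"
  shows "A $$ (i,j) = (if i = j then 1 else 0)"
proof -
  obtain c where c: "(A - 1\<^sub>m n) *\<^sub>v unit_vec n j = c \<cdot>\<^sub>v \<gamma>"
    using mv unfolding moves_along_def by (meson unit_vec_carrier)
  have "((A - 1\<^sub>m n) *\<^sub>v unit_vec n j) $ i = A $$ (i,j) - (if i = j then 1 else 0)"
    unfolding minus_one_mult_mat_vec[OF A unit_vec_carrier] using mult_unit_vec_index[OF A i(1) j] i j by simp
  then show ?thesis using c i \<gamma> by simp
qed

lemma moves_along_entries:
  fixes A :: "'a::comm_ring_1 mat"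
  assumes A: "A \<in> carrier_mat n n" and x: "x \<in> carrier_vec n" and mv: "moves_along n A x"
  obtains g where "\<And>i j. i < n \<Longrightarrow> j < n \<Longrightarrow> A $$ (i,j) = (if i = j then 1 else 0) + g j * x $ i"
proof -
  define g where "g j = (SOME c. (A - 1\<^sub>m n) *\<^sub>v unit_vec n j = c \<cdot>\<^sub>v x)" for j
  have g: "(A - 1\<^sub>m n) *\<^sub>v unit_vec n j = g j \<cdot>\<^sub>v x" for j
    unfolding g_def by (rule someI_ex) (use mv in \<open>simp add: moves_along_def\<close>)
  have "A $$ (i,j) = (if i = j then 1 else 0) + g j * x $ i" if ij: "i < n" "j < n" for i j
  proof -
    have "((A - 1\<^sub>m n) *\<^sub>v unit_vec n j) $ i = A $$ (i,j) - (if i = j then 1 else 0)"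
      unfolding minus_one_mult_mat_vec[OF A unit_vec_carrier] using mult_unit_vec_index[OF A ij] ij by simp
    then show ?thesis using g[of j] ij x by simp
  qed
  then show thesis by (rule that)
qed

lemma moves_along_conj:
  fixes A P Q :: "'a::field mat"
  assumes A: "A \<in> carrier_mat n n" and P: "P \<in> carrier_mat n n" and Q: "Q \<in> carrier_mat n n"
    and g: "\<gamma> \<in> carrier_vec n" and mv: "moves_along n A \<gamma>" and PQ: "P * Q = 1\<^sub>m n"
  shows "moves_along n (P * A * Q) (P *\<^sub>v \<gamma>)"
  unfolding moves_along_def
proof
  fix v :: "'a vec" assume v: "v \<in> carrier_vec n"
  have Qv: "Q *\<^sub>v v \<in> carrier_vec n" using Q v by simp
  obtain c where c: "(A - 1\<^sub>m n) *\<^sub>v (Q *\<^sub>v v) = c \<cdot>\<^sub>v \<gamma>" using mv Qv unfolding moves_along_def by blast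
  have "v = P *\<^sub>v (Q *\<^sub>v v)" using P Q v PQ by (simp add: assoc_mult_mat_vec[symmetric])
  then have "(P * A * Q - 1\<^sub>m n) *\<^sub>v v = P *\<^sub>v (A *\<^sub>v (Q *\<^sub>v v)) - P *\<^sub>v (Q *\<^sub>v v)"
    using minus_one_mult_mat_vec[of "P * A * Q" n v] conj_mult_mat_vec[OF P A Q v] P A Q v by simp
  also have "\<dots> = P *\<^sub>v ((A - 1\<^sub>m n) *\<^sub>v (Q *\<^sub>v v))"
    using P A Qv by (simp add: mult_minus_distrib_mat_vec minus_one_mult_mat_vec)
  also have "\<dots> = c \<cdot>\<^sub>v (P *\<^sub>v \<gamma>)" unfolding c by (rule mult_mat_vec[OF P g])
  finally show "\<exists>c. (P * A * Q - 1\<^sub>m n) *\<^sub>v v = c \<cdot>\<^sub>v (P *\<^sub>v \<gamma>)" by blast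
qed

lemma eigenvector_conj:
  fixes A P Q :: "'a::field mat"
  assumes A: "A \<in> carrier_mat n n" and P: "P \<in> carrier_mat n n" and Q: "Q \<in> carrier_mat n n"
    and g: "\<gamma> \<in> carrier_vec n" and eig: "A *\<^sub>v \<gamma> = \<mu> \<cdot>\<^sub>v \<gamma>" and QP: "Q * P = 1\<^sub>m n"
  shows "P * A * Q *\<^sub>v (P *\<^sub>v \<gamma>) = \<mu> \<cdot>\<^sub>v (P *\<^sub>v \<gamma>)"
proof -
  have "Q *\<^sub>v (P *\<^sub>v \<gamma>) = \<gamma>" using P Q g QP by (simp add: assoc_mult_mat_vec[symmetric])
  then show ?thesis
    using conj_mult_mat_vec[OF P A Q, of "P *\<^sub>v \<gamma>"] P g eig by (simp add: mult_mat_vec[OF P g])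
qed

text \<open>After a change of basis taking \<open>x\<close> to some \<open>e\<^sub>k\<close>, all rows but the \<open>k\<close>-th are
  identity rows.\<close>
lemma det_moves_along_eigenvector:
  fixes N :: "'a::field mat"
  assumes N: "N \<in> carrier_mat d d" and x: "x \<in> carrier_vec d" "x \<noteq> 0\<^sub>v d"
    and mv: "moves_along d N x" and eig: "N *\<^sub>v x = \<mu> \<cdot>\<^sub>v x"
  shows "det N = \<mu>"
proof -
  obtain P Q and p :: "nat \<Rightarrow> nat"
    where PQ: "P \<in> carrier_mat d d" "Q \<in> carrier_mat d d" "P * Q = 1\<^sub>m d" "Q * P = 1\<^sub>m d"
    and "\<forall>t<1. p t < d \<and> P *\<^sub>v x = unit_vec d (p t)"
    using gauss_jordan_independent[OF lin_indep_family_single[OF x]] by blast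
  then have Px: "p 0 < d" "P *\<^sub>v x = unit_vec d (p 0)" by auto
  define k where "k = p 0"
  define N' where "N' = P * N * Q"
  have N': "N' \<in> carrier_mat d d" unfolding N'_def using PQ N by simp
  have k: "k < d" and Px': "P *\<^sub>v x = unit_vec d k" using Px unfolding k_def by auto
  have "det N' = det P * det N * det Q" unfolding N'_def using PQ N by (simp add: det_mult)
  also have "det P * det Q = 1" using det_mult[OF PQ(1) PQ(2)] PQ(3) by simp
  then have "det P * det N * det Q = det N" by (simp add: algebra_simps)
  finally have "det N' = det N" .
  have mv': "moves_along d N' (unit_vec d k)"
    using moves_along_conj[OF N PQ(1) PQ(2) x(1) mv PQ(3)] Px' unfolding N'_def by simp
  have "det N' = N' $$ (k,k)"
    by (rule det_identity_rows_except[OF N' k], rule moves_along_identity_row[OF N' unit_vec_carrier mv'])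
       (auto simp: unit_vec_def)
  also have "N' $$ (k,k) = (N' *\<^sub>v unit_vec d k) $ k" using mult_unit_vec_index[OF N' k k] by simp
  also have "N' *\<^sub>v unit_vec d k = \<mu> \<cdot>\<^sub>v unit_vec d k"
    using eigenvector_conj[OF N PQ(1) PQ(2) x(1) eig PQ(4)] Px' unfolding N'_def by simp
  finally show ?thesis using \<open>det N' = det N\<close> k by simp
qed

lemma diagonalizable_square_zero_eq_one:
  fixes A :: "'a::field mat"
  assumes A: "A \<in> carrier_mat n n" and dg: "diagonalizable n A"
    and sq: "\<And>v. v \<in> carrier_vec n \<Longrightarrow> (A - 1\<^sub>m n) *\<^sub>v ((A - 1\<^sub>m n) *\<^sub>v v) = 0\<^sub>v n"
  shows "A = 1\<^sub>m n"
proof -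
  obtain D where D: "D \<in> carrier_mat n n" "diagonal_mat D" "similar_mat A D"
    using dg unfolding diagonalizable_def by blast
  obtain S T where ST: "similar_mat_wit A D S T" using D(3) unfolding similar_mat_def by blast
  have S: "S \<in> carrier_mat n n" and T: "T \<in> carrier_mat n n" and STm: "S * T = 1\<^sub>m n" "T * S = 1\<^sub>m n"
    and AST: "A = S * D * T"
    using ST A unfolding similar_mat_wit_def Let_def by auto
  have A1: "A - 1\<^sub>m n \<in> carrier_mat n n" using A by (intro minus_carrier_mat) auto
  have Dd: "D $$ (i,j) = 0" if "i < n" "j < n" "i \<noteq> j" for i j
    using D(1,2) that unfolding diagonal_mat_def by auto
  txt \<open>Each diagonal entry \<open>e\<close> is an eigenvalue of \<open>A\<close>, so \<open>(e - 1)\<^sup>2 = 0\<close>.\<close>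
  have Djj: "D $$ (j,j) = 1" if j: "j < n" for j
  proof -
    define e where "e = D $$ (j,j)"
    define v where "v = S *\<^sub>v unit_vec n j"
    have v: "v \<in> carrier_vec n" unfolding v_def using S by simp
    have Dw: "D *\<^sub>v unit_vec n j = e \<cdot>\<^sub>v unit_vec n j"
      by (rule eq_vecI) (use D(1) j Dd mult_unit_vec_index[OF D(1) _ j] in \<open>auto simp: e_def\<close>)
    have "T *\<^sub>v v = unit_vec n j" unfolding v_def using S T STm by (simp add: assoc_mult_mat_vec[symmetric])
    then have "A *\<^sub>v v = e \<cdot>\<^sub>v v"
      unfolding AST v_def using conj_mult_mat_vec[OF S D(1) T v] S Dw by (simp add: v_def mult_mat_vec)
    then have A1v: "(A - 1\<^sub>m n) *\<^sub>v v = (e - 1) \<cdot>\<^sub>v v"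
      unfolding minus_one_mult_mat_vec[OF A v] by (intro eq_vecI) (use v in \<open>auto simp: algebra_simps\<close>)
    have z: "(e - 1) \<cdot>\<^sub>v ((e - 1) \<cdot>\<^sub>v v) = 0\<^sub>v n"
      using sq[OF v] unfolding A1v mult_mat_vec[OF A1 v] A1v by simp
    have "v \<noteq> 0\<^sub>v n"
    proof
      assume "v = 0\<^sub>v n"
      then have "unit_vec n j = T *\<^sub>v 0\<^sub>v n" using \<open>T *\<^sub>v v = unit_vec n j\<close> by simp
      also have "\<dots> = 0\<^sub>v n" using T by (auto intro!: eq_vecI simp: scalar_prod_def)
      finally have "unit_vec n j $ j = (0\<^sub>v n :: 'a vec) $ j" by simp
      then show False using j by simp
    qed
    then obtain i where i: "i < n" "v $ i \<noteq> 0" using v by (metis eq_vecI carrier_vecD index_zero_vec)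
    have "(e - 1) * ((e - 1) * v $ i) = 0" using arg_cong[OF z, of "\<lambda>y. y $ i"] i v by simp
    then show ?thesis using i(2) unfolding e_def by simp
  qed
  have "D = 1\<^sub>m n" by (rule eq_matI) (use D(1) Djj Dd in auto)
  then show ?thesis unfolding AST using S T STm by simp
qed

lemma reflection_eigenvalue_ne_one:
  fixes A :: "'a::field mat"
  assumes A: "A \<in> carrier_mat n n" and dg: "diagonalizable n A" and mv: "moves_along n A \<gamma>"
    and \<gamma>: "\<gamma> \<in> refl_image n A" "\<gamma> \<noteq> 0\<^sub>v n" and eig: "A *\<^sub>v \<gamma> = \<mu> \<cdot>\<^sub>v \<gamma>"
  shows "\<mu> \<noteq> 1"
proof
  assume "\<mu> = 1"
  obtain v0 where v0: "v0 \<in> carrier_vec n" "\<gamma> = (A - 1\<^sub>m n) *\<^sub>v v0"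
    using \<gamma>(1) unfolding refl_image_def by blast
  have A1: "A - 1\<^sub>m n \<in> carrier_mat n n" using A by (intro minus_carrier_mat) auto
  have g: "\<gamma> \<in> carrier_vec n" using v0 A1 by simp
  have A1g: "(A - 1\<^sub>m n) *\<^sub>v \<gamma> = 0\<^sub>v n"
    unfolding minus_one_mult_mat_vec[OF A g] eig \<open>\<mu> = 1\<close> using g by simp
  have "(A - 1\<^sub>m n) *\<^sub>v ((A - 1\<^sub>m n) *\<^sub>v v) = 0\<^sub>v n" if v: "v \<in> carrier_vec n" for v
  proof -
    obtain c where c: "(A - 1\<^sub>m n) *\<^sub>v v = c \<cdot>\<^sub>v \<gamma>" using mv v unfolding moves_along_def by blast
    show ?thesis unfolding c mult_mat_vec[OF A1 g] A1g by (auto intro!: eq_vecI)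
  qed
  then have "A = 1\<^sub>m n" by (rule diagonalizable_square_zero_eq_one[OF A dg])
  then have "\<gamma> = 0\<^sub>v n" using v0 by (simp add: minus_one_mult_mat_vec[OF one_carrier_mat v0(1)])
  with \<gamma>(2) show False ..
qed

lemma reflection_moves_along:
  fixes A :: "'a::field mat"
  assumes r: "is_reflection n A" and rv: "is_reflection_vector n A \<gamma>"
  shows "moves_along n A \<gamma>"
  unfolding moves_along_def
proof
  fix v :: "'a vec" assume v: "v \<in> carrier_vec n"
  obtain u where u: "u \<in> carrier_vec n" "refl_image n A = {c \<cdot>\<^sub>v u | c. True}"
    using r unfolding is_reflection_def by blast
  obtain c0 where c0: "\<gamma> = c0 \<cdot>\<^sub>v u" using rv u(2) unfolding is_reflection_vector_def by blast
  have "c0 \<noteq> 0" using c0 rv u(1) unfolding is_reflection_vector_def by auto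
  have "(A - 1\<^sub>m n) *\<^sub>v v \<in> refl_image n A" unfolding refl_image_def using v by blast
  then obtain c where "(A - 1\<^sub>m n) *\<^sub>v v = c \<cdot>\<^sub>v u" using u(2) by blast
  also have "\<dots> = (c / c0) \<cdot>\<^sub>v \<gamma>" unfolding c0 smult_smult_assoc using \<open>c0 \<noteq> 0\<close> by simp
  finally show "\<exists>c. (A - 1\<^sub>m n) *\<^sub>v v = c \<cdot>\<^sub>v \<gamma>" ..
qed

lemma reflection_vector_carrier:
  assumes "A \<in> carrier_mat n n" "is_reflection_vector n A \<gamma>"
  shows "\<gamma> \<in> carrier_vec n"
proof -
  have "A - 1\<^sub>m n \<in> carrier_mat n n" using assms(1) by (intro minus_carrier_mat) auto
  then show ?thesis using assms(2) unfolding is_reflection_vector_def refl_image_def by auto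
qed

section \<open>Common images of \<open>\<And>\<^sup>d A\<^sub>t - 1\<close> for reflections \<open>A\<^sub>t\<close>\<close>

lemma in_ext_image_vanishes:
  fixes A :: "'a::comm_ring_1 mat"
  assumes A: "A \<in> carrier_mat n n" and k: "k < n" and mv: "moves_along n A (unit_vec n k)"
    and \<omega>: "in_ext_image n d A \<omega>" and J: "J \<in> dsubsets n d" and kJ: "k \<notin> J"
  shows "\<omega> J = 0"
proof -
  have "compound_minus_one A J K = 0" if K: "K \<in> dsubsets n d" for K
  proof -
    have "compound A J K = (if J = K then 1 else 0)"
    proof (rule compound_identity_rows[OF A J K])
      fix i j assume i: "i \<in> J" and j: "j < n"
      have "i < n" using dsubsetsD(1)[OF J] i by auto
      moreover have "i \<noteq> k" using i kJ by auto
      then have "unit_vec n k $ i = (0::'a)" using \<open>i < n\<close> k by simp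
      ultimately show "A $$ (i, j) = (if i = j then 1 else 0)"
        using moves_along_identity_row[OF A unit_vec_carrier mv] j by blast
    qed
    then show ?thesis unfolding compound_minus_one_def delta_mat_def by simp
  qed
  then show ?thesis using \<omega> J unfolding in_ext_image_def mat_vec_on_def by auto
qed

lemma in_ext_image_independent_eq_zero:
  fixes A :: "nat \<Rightarrow> 'a::field mat" and \<gamma> :: "nat \<Rightarrow> 'a vec"
  assumes A: "\<And>t. t < Suc d \<Longrightarrow> A t \<in> carrier_mat n n"
    and mv: "\<And>t. t < Suc d \<Longrightarrow> moves_along n (A t) (\<gamma> t)"
    and indep: "lin_indep_family n (Suc d) \<gamma>"
    and \<omega>: "\<And>t. t < Suc d \<Longrightarrow> in_ext_image n d (A t) \<omega>"
    and I: "I \<in> dsubsets n d"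
  shows "\<omega> I = 0"
proof -
  let ?D = "dsubsets n d"
  have \<gamma>: "\<And>t. t < Suc d \<Longrightarrow> \<gamma> t \<in> carrier_vec n" using indep unfolding lin_indep_family_def by blast
  obtain P Q and p :: "nat \<Rightarrow> nat"
    where PQ: "P \<in> carrier_mat n n" "Q \<in> carrier_mat n n" "P * Q = 1\<^sub>m n" "Q * P = 1\<^sub>m n"
      and inj: "inj_on p {0..<Suc d}" and Pp: "\<forall>t<Suc d. p t < n \<and> P *\<^sub>v \<gamma> t = unit_vec n (p t)"
    using gauss_jordan_independent[OF indep] by blast
  define \<omega>' where "\<omega>' = mat_vec_on ?D (compound P) \<omega>"
  have "\<omega>' J = 0" if J: "J \<in> ?D" for J
  proof -
    have "\<not> p ` {0..<Suc d} \<subseteq> J"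
    proof
      assume "p ` {0..<Suc d} \<subseteq> J"
      then have "card (p ` {0..<Suc d}) \<le> card J" by (rule card_mono[OF dsubsetsD(3)[OF J]])
      then show False using card_image[OF inj] dsubsetsD(2)[OF J] by simp
    qed
    then obtain t where "t \<in> {0..<Suc d}" "p t \<notin> J" by blast
    then have t: "t < Suc d" "p t \<notin> J" by auto
    have A': "P * A t * Q \<in> carrier_mat n n" using PQ A[OF t(1)] by simp
    have pt: "p t < n" and P\<gamma>: "P *\<^sub>v \<gamma> t = unit_vec n (p t)" using Pp t(1) by auto
    have mv': "moves_along n (P * A t * Q) (unit_vec n (p t))"
      using moves_along_conj[OF A[OF t(1)] PQ(1,2) \<gamma>[OF t(1)] mv[OF t(1)] PQ(3)] P\<gamma> by simp
    have "in_ext_image n d (P * A t * Q) \<omega>'"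
      unfolding \<omega>'_def by (rule in_ext_image_conj[OF PQ(1,2) A[OF t(1)] PQ(4) \<omega>[OF t(1)]])
    then show ?thesis by (rule in_ext_image_vanishes[OF A' pt mv' _ J t(2)])
  qed
  moreover have "\<omega> I = mat_vec_on ?D (compound Q) \<omega>' I"
    unfolding \<omega>'_def using compound_inverse[OF PQ(2,1,4) I] finite_dsubsets I
    by (intro mat_vec_on_inverse[symmetric]) auto
  ultimately show ?thesis unfolding mat_vec_on_def by simp
qed

lemma submatrix_leading_index:
  assumes "A \<in> carrier_mat n n" "d \<le> n" "a < d" "b < d"
  shows "submatrix A {0..<d} {0..<d} $$ (a, b) = A $$ (a, b)"
  using assms dsubsetsD(4)[OF atLeastLessThan_in_dsubsets, of d n]
  by (subst submatrix_index) (auto simp: pick_atLeastLessThan)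

text \<open>The rows \<open>i \<ge> d\<close> of \<open>A\<close> are identity rows, so they vanish on the first \<open>d\<close>
  columns.\<close>
lemma compound_leading_column_off:
  fixes A :: "'a::field mat"
  assumes A: "A \<in> carrier_mat n n" and x: "x \<in> carrier_vec n" and mv: "moves_along n A x"
    and supp: "\<And>i. d \<le> i \<Longrightarrow> i < n \<Longrightarrow> x $ i = 0" and dn: "d \<le> n"
    and I: "I \<in> dsubsets n d" and ne: "I \<noteq> {0..<d}"
  shows "compound A I {0..<d} = 0"
proof -
  note ID = dsubsetsD[OF I] and I0D = dsubsetsD[OF atLeastLessThan_in_dsubsets[OF dn]]
  have "\<not> I \<subseteq> {0..<d}" using ne card_subset_eq[OF I0D(3)] ID I0D by auto
  then obtain i where "i \<in> I" "i \<notin> {0..<d}" by blast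
  then have i: "i \<in> I" "d \<le> i" "i < n" using ID(1) by auto
  define a where "a = card {y\<in>I. y < i}"
  have "card {y\<in>I. y < i} < card I" by (rule psubset_card_mono[OF ID(3)]) (use i in auto)
  then have a: "a < d" unfolding a_def using ID by simp
  have pa: "pick I a = i" unfolding a_def by (rule pick_card_in_set[OF i(1)])
  have S: "submatrix A I {0..<d} \<in> carrier_mat d d" using A ID I0D by (auto simp: dim_submatrix)
  have "det (submatrix A I {0..<d}) = 0"
  proof (rule det_zero_row[OF S a])
    fix b assume b: "b < d"
    have "submatrix A I {0..<d} $$ (a, b) = A $$ (i, b)"
      using A ID I0D a b pa by (subst submatrix_index) (auto simp: pick_atLeastLessThan)
    also have "\<dots> = 0" using moves_along_identity_row[OF A x mv i(3) supp[OF i(2,3)]] b i dn by auto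
    finally show "submatrix A I {0..<d} $$ (a, b) = 0" .
  qed
  then show ?thesis unfolding compound_def .
qed

text \<open>The leading block moves along the truncation of \<open>x\<close>, which is an eigenvector for the same
  eigenvalue.\<close>
lemma compound_leading_block:
  fixes A :: "'a::field mat"
  assumes A: "A \<in> carrier_mat n n" and x: "x \<in> carrier_vec n" "x \<noteq> 0\<^sub>v n" and mv: "moves_along n A x"
    and supp: "\<And>i. d \<le> i \<Longrightarrow> i < n \<Longrightarrow> x $ i = 0" and eig: "A *\<^sub>v x = \<mu> \<cdot>\<^sub>v x" and dn: "d \<le> n"
  shows "compound A {0..<d} {0..<d} = \<mu>"
proof -
  define N where "N = submatrix A {0..<d} {0..<d}"
  define x' where "x' = vec d (\<lambda>a. x $ a)"
  have N: "N \<in> carrier_mat d d" unfolding N_def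
    using A dsubsetsD[OF atLeastLessThan_in_dsubsets[OF dn]] by (auto simp: dim_submatrix)
  have Ni: "N $$ (a, b) = A $$ (a, b)" if "a < d" "b < d" for a b
    unfolding N_def using submatrix_leading_index[OF A dn that] .
  have x': "x' \<in> carrier_vec d" unfolding x'_def by simp
  have "x' \<noteq> 0\<^sub>v d"
  proof
    assume "x' = 0\<^sub>v d"
    then have "\<And>a. a < d \<Longrightarrow> x $ a = 0" unfolding x'_def by (metis index_vec index_zero_vec(1))
    then have "x = 0\<^sub>v n" using supp x by (auto intro!: eq_vecI) (meson not_le)
    with x(2) show False ..
  qed
  moreover obtain g where g: "\<And>i j. i < n \<Longrightarrow> j < n \<Longrightarrow> A $$ (i,j) = (if i = j then 1 else 0) + g j * x $ i"
    using moves_along_entries[OF A x(1) mv] by blast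
  have "moves_along d N x'" unfolding moves_along_def
  proof
    fix v :: "'a vec" assume v: "v \<in> carrier_vec d"
    have "(N - 1\<^sub>m d) *\<^sub>v v = (\<Sum>b<d. g b * v $ b) \<cdot>\<^sub>v x'"
    proof (rule eq_vecI)
      fix a assume "a < dim_vec ((\<Sum>b<d. g b * v $ b) \<cdot>\<^sub>v x')"
      then have a: "a < d" unfolding x'_def by simp
      have "((N - 1\<^sub>m d) *\<^sub>v v) $ a = (\<Sum>b<d. N $$ (a,b) * v $ b) - v $ a"
        unfolding minus_one_mult_mat_vec[OF N v] using a v N by (simp add: scalar_prod_def atLeast0LessThan)
      also have "(\<Sum>b<d. N $$ (a,b) * v $ b) = (\<Sum>b<d. (if a = b then v $ b else 0) + x $ a * (g b * v $ b))"
        by (rule sum.cong[OF refl]) (use Ni a g dn in \<open>auto simp: algebra_simps\<close>)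
      also have "\<dots> = v $ a + x $ a * (\<Sum>b<d. g b * v $ b)"
        using a by (simp add: sum.distrib sum_distrib_left)
      finally show "((N - 1\<^sub>m d) *\<^sub>v v) $ a = ((\<Sum>b<d. g b * v $ b) \<cdot>\<^sub>v x') $ a"
        unfolding x'_def using a by simp
    qed (use N v x' in simp)
    then show "\<exists>c. (N - 1\<^sub>m d) *\<^sub>v v = c \<cdot>\<^sub>v x'" by blast
  qed
  moreover have "N *\<^sub>v x' = \<mu> \<cdot>\<^sub>v x'"
  proof (rule eq_vecI)
    fix a assume "a < dim_vec (\<mu> \<cdot>\<^sub>v x')"
    then have a: "a < d" unfolding x'_def by simp
    have "(N *\<^sub>v x') $ a = (\<Sum>b\<in>{0..<d}. A $$ (a,b) * x $ b)"
      using N a Ni by (simp add: scalar_prod_def x'_def)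
    also have "\<dots> = (\<Sum>b\<in>{0..<n}. A $$ (a,b) * x $ b)"
      by (rule sum.mono_neutral_left) (use dn supp in auto)
    also have "\<dots> = (A *\<^sub>v x) $ a" using A x a dn by (simp add: scalar_prod_def)
    also have "\<dots> = \<mu> * x $ a" unfolding eig using a dn x by simp
    finally show "(N *\<^sub>v x') $ a = (\<mu> \<cdot>\<^sub>v x') $ a" unfolding x'_def using a by simp
  qed (use N x' in simp)
  ultimately have "det N = \<mu>" by (rule det_moves_along_eigenvector[OF N x'])
  then show ?thesis unfolding compound_def N_def .
qed

lemma in_ext_image_leading_basis_vector:
  fixes A :: "'a::field mat"
  assumes A: "A \<in> carrier_mat n n" and x: "x \<in> carrier_vec n" "x \<noteq> 0\<^sub>v n" and mv: "moves_along n A x"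
    and supp: "\<And>i. d \<le> i \<Longrightarrow> i < n \<Longrightarrow> x $ i = 0" and eig: "A *\<^sub>v x = \<mu> \<cdot>\<^sub>v x"
    and \<mu>: "\<mu> \<noteq> 1" and dn: "d \<le> n"
  shows "in_ext_image n d A (\<lambda>I. if I = {0..<d} then 1 else 0)"
proof -
  let ?D = "dsubsets n d" and ?I0 = "{0..<d}"
  have I0: "?I0 \<in> ?D" by (rule atLeastLessThan_in_dsubsets[OF dn])
  define \<theta> :: "nat set \<Rightarrow> 'a" where "\<theta> J = (if J = ?I0 then 1 / (\<mu> - 1) else 0)" for J
  have "(if I = ?I0 then 1 else 0) = mat_vec_on ?D (compound_minus_one A) \<theta> I" if I: "I \<in> ?D" for I
  proof -
    have "mat_vec_on ?D (compound_minus_one A) \<theta> I = compound_minus_one A I ?I0 / (\<mu> - 1)"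
      unfolding mat_vec_on_def \<theta>_def using finite_dsubsets I0 by (simp add: if_distrib cong: if_cong)
    also have "\<dots> = (if I = ?I0 then 1 else 0)"
      using compound_leading_column_off[OF A x(1) mv supp dn I] compound_leading_block[OF A x mv supp eig dn] \<mu>
      unfolding compound_minus_one_def delta_mat_def by auto
    finally show ?thesis by simp
  qed
  then show ?thesis unfolding in_ext_image_def by blast
qed

lemma mult_conj_cancel:
  fixes P Q A :: "'a::comm_ring_1 mat"
  assumes P: "P \<in> carrier_mat n n" and Q: "Q \<in> carrier_mat n n" and A: "A \<in> carrier_mat n n"
    and QP: "Q * P = 1\<^sub>m n"
  shows "Q * (P * A * Q) * P = A"
proof -
  have "Q * (P * A * Q) * P = (Q * P) * A * (Q * P)"
    using P Q A by (simp add: assoc_mult_mat[of _ n n _ n _ n])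
  then show ?thesis using QP A by simp
qed

lemma in_ext_image_dependent_nonzero:
  fixes A :: "nat \<Rightarrow> 'a::field mat" and \<gamma> :: "nat \<Rightarrow> 'a vec" and \<mu> :: "nat \<Rightarrow> 'a"
  assumes A: "\<And>t. t < Suc d \<Longrightarrow> A t \<in> carrier_mat n n"
    and \<gamma>: "\<And>t. t < Suc d \<Longrightarrow> \<gamma> t \<in> carrier_vec n" "\<And>t. t < Suc d \<Longrightarrow> \<gamma> t \<noteq> 0\<^sub>v n"
    and mv: "\<And>t. t < Suc d \<Longrightarrow> moves_along n (A t) (\<gamma> t)"
    and eig: "\<And>t. t < Suc d \<Longrightarrow> A t *\<^sub>v \<gamma> t = \<mu> t \<cdot>\<^sub>v \<gamma> t"
    and \<mu>: "\<And>t. t < Suc d \<Longrightarrow> \<mu> t \<noteq> 1"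
    and dep: "\<not> lin_indep_family n (Suc d) \<gamma>" and dn: "d \<le> n"
  shows "\<exists>\<omega>. (\<exists>I\<in>dsubsets n d. \<omega> I \<noteq> 0) \<and> (\<forall>t<Suc d. in_ext_image n d (A t) \<omega>)"
proof -
  let ?D = "dsubsets n d" and ?I0 = "{0..<d}"
  have I0: "?I0 \<in> ?D" by (rule atLeastLessThan_in_dsubsets[OF dn])
  obtain P Q where PQ: "P \<in> carrier_mat n n" "Q \<in> carrier_mat n n" "P * Q = 1\<^sub>m n" "Q * P = 1\<^sub>m n"
    and supp: "\<forall>t<Suc d. \<forall>i. d \<le> i \<longrightarrow> i < n \<longrightarrow> (P *\<^sub>v \<gamma> t) $ i = 0"
    using gauss_jordan_dependent[OF \<gamma>(1) dep] by blast
  define e :: "nat set \<Rightarrow> 'a" where "e I = (if I = ?I0 then 1 else 0)" for I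
  define \<omega> where "\<omega> = mat_vec_on ?D (compound Q) e"
  have "in_ext_image n d (A t) \<omega>" if t: "t < Suc d" for t
  proof -
    define x where "x = P *\<^sub>v \<gamma> t"
    have x: "x \<in> carrier_vec n" unfolding x_def using PQ(1) \<gamma>(1)[OF t] by simp
    have "Q *\<^sub>v x = \<gamma> t" unfolding x_def using PQ \<gamma>(1)[OF t] by (simp add: assoc_mult_mat_vec[symmetric])
    moreover have "Q *\<^sub>v 0\<^sub>v n = 0\<^sub>v n" using PQ(2) by (auto intro!: eq_vecI simp: scalar_prod_def)
    ultimately have x0: "x \<noteq> 0\<^sub>v n" using \<gamma>(2)[OF t] by auto
    have A': "P * A t * Q \<in> carrier_mat n n" using PQ A[OF t] by simp
    have mv': "moves_along n (P * A t * Q) x"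
      unfolding x_def by (rule moves_along_conj[OF A[OF t] PQ(1,2) \<gamma>(1)[OF t] mv[OF t] PQ(3)])
    have eig': "P * A t * Q *\<^sub>v x = \<mu> t \<cdot>\<^sub>v x"
      unfolding x_def by (rule eigenvector_conj[OF A[OF t] PQ(1,2) \<gamma>(1)[OF t] eig[OF t] PQ(4)])
    have supp': "\<And>i. d \<le> i \<Longrightarrow> i < n \<Longrightarrow> x $ i = 0" using supp t unfolding x_def by blast
    have "in_ext_image n d (P * A t * Q) e"
      unfolding e_def by (rule in_ext_image_leading_basis_vector[OF A' x x0 mv' supp' eig' \<mu>[OF t] dn])
    from in_ext_image_conj[OF PQ(2,1) _ PQ(3) this] show ?thesis
      unfolding \<omega>_def mult_conj_cancel[OF PQ(1,2) A[OF t] PQ(4)] using PQ A[OF t] by simp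
  qed
  moreover have "\<exists>I\<in>?D. \<omega> I \<noteq> 0"
  proof (rule ccontr)
    assume "\<not> ?thesis"
    then have "mat_vec_on ?D (compound P) \<omega> ?I0 = 0" by (simp add: mat_vec_on_def)
    moreover have "mat_vec_on ?D (compound P) \<omega> ?I0 = 1"
      unfolding \<omega>_def using compound_inverse[OF PQ(1-3) I0] finite_dsubsets I0
      by (subst mat_vec_on_inverse) (auto simp: e_def)
    ultimately show False by simp
  qed
  ultimately show ?thesis by blast
qed

lemma ext_pow_iso_reflects_ext_image:
  assumes "ext_pow_iso W n d \<rho>1 \<rho>2 P"
  obtains Q where
    "\<And>\<omega> I. I \<in> dsubsets n d \<Longrightarrow> mat_vec_on (dsubsets n d) P (mat_vec_on (dsubsets n d) Q \<omega>) I = \<omega> I"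
    "\<And>g \<omega>. g \<in> carrier W \<Longrightarrow> in_ext_image n d (\<rho>2 g) \<omega> \<Longrightarrow>
       in_ext_image n d (\<rho>1 g) (mat_vec_on (dsubsets n d) Q \<omega>)"
proof -
  let ?D = "dsubsets n d"
  obtain Q where PQ: "\<And>I J. I \<in> ?D \<Longrightarrow> J \<in> ?D \<Longrightarrow> mat_mult_on ?D P Q I J = delta_mat I J"
    and QP: "\<And>I J. I \<in> ?D \<Longrightarrow> J \<in> ?D \<Longrightarrow> mat_mult_on ?D Q P I J = delta_mat I J"
    and int: "\<And>g I J. g \<in> carrier W \<Longrightarrow> I \<in> ?D \<Longrightarrow> J \<in> ?D \<Longrightarrow>
        mat_mult_on ?D P (compound (\<rho>1 g)) I J = mat_mult_on ?D (compound (\<rho>2 g)) P I J"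
    using assms unfolding ext_pow_iso_def mat_mult_on_def delta_mat_def by blast
  have inverse: "mat_vec_on ?D P (mat_vec_on ?D Q \<omega>) I = \<omega> I" if "I \<in> ?D" for \<omega> I
    by (rule mat_vec_on_inverse[OF finite_dsubsets PQ that]) (use that in auto)
  have transfer: "in_ext_image n d (\<rho>1 g) (mat_vec_on ?D Q \<omega>)"
    if "g \<in> carrier W" "in_ext_image n d (\<rho>2 g) \<omega>" for g \<omega>
    by (rule in_ext_image_intertwine[OF mat_mult_on_intertwine_inverse[OF finite_dsubsets PQ QP int]])
       (use that in auto)
  show thesis by (rule that[OF inverse transfer])
qed

lemma reflection_rep_generator:
  fixes \<rho> :: "'g \<Rightarrow> 'a::field mat"
  assumes rep: "reflection_rep W k s n \<rho>" and S: "s ` {..<k} \<subseteq> carrier W"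
    and vec: "\<forall>i<k. is_reflection_vector n (\<rho> (s i)) (\<gamma> i) \<and> \<rho> (s i) *\<^sub>v \<gamma> i = \<mu> i \<cdot>\<^sub>v \<gamma> i"
    and i: "i < k"
  shows "\<rho> (s i) \<in> carrier_mat n n" "\<gamma> i \<in> carrier_vec n" "\<gamma> i \<noteq> 0\<^sub>v n"
    "moves_along n (\<rho> (s i)) (\<gamma> i)" "\<rho> (s i) *\<^sub>v \<gamma> i = \<mu> i \<cdot>\<^sub>v \<gamma> i" "\<mu> i \<noteq> 1"
proof -
  have refl: "is_reflection n (\<rho> (s i))" using rep i unfolding reflection_rep_def by blast
  have rv: "is_reflection_vector n (\<rho> (s i)) (\<gamma> i)" using vec i by blast
  show eig: "\<rho> (s i) *\<^sub>v \<gamma> i = \<mu> i \<cdot>\<^sub>v \<gamma> i" using vec i by blast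
  show A: "\<rho> (s i) \<in> carrier_mat n n"
    using rep S i unfolding reflection_rep_def is_rep_def by blast
  show "\<gamma> i \<in> carrier_vec n" by (rule reflection_vector_carrier[OF A rv])
  show "\<gamma> i \<noteq> 0\<^sub>v n" using rv unfolding is_reflection_vector_def by blast
  show mv: "moves_along n (\<rho> (s i)) (\<gamma> i)" by (rule reflection_moves_along[OF refl rv])
  show "\<mu> i \<noteq> 1"
    using reflection_eigenvalue_ne_one[OF A _ mv _ _ eig] refl rv
    unfolding is_reflection_def is_reflection_vector_def by blast
qed

theorem lemma5p4:
  fixes W :: "('g, 'b) monoid_scheme"
    and k n d :: nat
    and s :: "nat \<Rightarrow> 'g"
    and \<rho>1 \<rho>2 :: "'g \<Rightarrow> 'a::field_char_0 mat"
    and \<alpha> \<beta> :: "nat \<Rightarrow> 'a vec"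
    and lam mu :: "nat \<Rightarrow> 'a"
    and P :: "nat set \<Rightarrow> nat set \<Rightarrow> 'a"
    and j :: "nat \<Rightarrow> nat"
  assumes W_group: "group W"
    and S_in: "s ` {..<k} \<subseteq> carrier W"
    and S_gen: "carrier W = generate W (s ` {..<k})"
    and rep1: "reflection_rep W k s n \<rho>1" and irr1: "irreducible_rep W n \<rho>1"
    and rep2: "reflection_rep W k s n \<rho>2" and irr2: "irreducible_rep W n \<rho>2"
    and alpha: "\<forall>i < k. is_reflection_vector n (\<rho>1 (s i)) (\<alpha> i) \<and>
                          \<rho>1 (s i) *\<^sub>v \<alpha> i = lam i \<cdot>\<^sub>v \<alpha> i"
    and beta: "\<forall>i < k. is_reflection_vector n (\<rho>2 (s i)) (\<beta> i) \<and>
                          \<rho>2 (s i) *\<^sub>v \<beta> i = mu i \<cdot>\<^sub>v \<beta> i"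
    and d_ge: "1 \<le> d" and d_le: "d \<le> n - 1"
    and psi: "ext_pow_iso W n d \<rho>1 \<rho>2 P"
    and j_range: "\<forall>t < d + 1. j t < k"
    and indep1: "lin_indep_family n (d + 1) (\<lambda>t. \<alpha> (j t))"
  shows "lin_indep_family n (d + 1) (\<lambda>t. \<beta> (j t))"
proof (rule ccontr)
  assume "\<not> lin_indep_family n (d + 1) (\<lambda>t. \<beta> (j t))"
  then have dep2: "\<not> lin_indep_family n (Suc d) (\<lambda>t. \<beta> (j t))" by simp
  have indep1': "lin_indep_family n (Suc d) (\<lambda>t. \<alpha> (j t))" using indep1 by simp
  let ?D = "dsubsets n d"
  have j: "\<And>t. t < Suc d \<Longrightarrow> j t < k" using j_range by simp
  note gen1 = reflection_rep_generator[OF rep1 S_in alpha j]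
  note gen2 = reflection_rep_generator[OF rep2 S_in beta j]
  obtain \<omega> where \<omega>: "\<exists>I\<in>?D. \<omega> I \<noteq> 0" "\<forall>t<Suc d. in_ext_image n d (\<rho>2 (s (j t))) \<omega>"
    using in_ext_image_dependent_nonzero[OF gen2 dep2] d_le by force
  obtain Q where inverse: "\<And>\<omega> I. I \<in> ?D \<Longrightarrow> mat_vec_on ?D P (mat_vec_on ?D Q \<omega>) I = \<omega> I"
    and transfer: "\<And>g \<omega>. g \<in> carrier W \<Longrightarrow> in_ext_image n d (\<rho>2 g) \<omega> \<Longrightarrow>
       in_ext_image n d (\<rho>1 g) (mat_vec_on ?D Q \<omega>)"
    using ext_pow_iso_reflects_ext_image[OF psi] by blast
  have \<omega>1: "in_ext_image n d (\<rho>1 (s (j t))) (mat_vec_on ?D Q \<omega>)" if t: "t < Suc d" for t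
    using transfer[OF _ \<omega>(2)[rule_format, OF t]] S_in j[OF t] by blast
  have "mat_vec_on ?D Q \<omega> I = 0" if "I \<in> ?D" for I
    by (rule in_ext_image_independent_eq_zero[where A = "\<lambda>t. \<rho>1 (s (j t))" and \<gamma> = "\<lambda>t. \<alpha> (j t)"])
       (use gen1 indep1' \<omega>1 that in auto)
  then have "\<omega> I = 0" if "I \<in> ?D" for I
    using inverse[OF that, of \<omega>] by (simp add: mat_vec_on_def)
  with \<omega>(1) show False by blast
qed

end
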